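(* Let the standing assumptions hold (with $\mu\ge0$), let $\alpha\in(0,2/L)$ and $p\in(0,1]$, and let $(\bm{x}^\star,\bm{w}^\star,\bm{u}_b^\star)$ satisfy $\bm{w}^\star=\bm{x}^\star-\alpha\nabla F(\bm{x}^\star)$, $\bm{x}^\star=\mathrm{prox}_{\alpha R}(\bm{A}(\bm{w}^\star-\sqrt{\bm{B}}\bm{u}_b^\star))$, $\bm{0}=\sqrt{\bm{B}}(\bm{w}^\star-\sqrt{\bm{B}}\bm{u}_b^\star)$, with $\bm{u}_b^\star\in\mathrm{range}(\sqrt{\bm{B}})$. Then for the iterates of the algorithm below, $\|\nabla F(\bm{x}^k)-\nabla F(\bm{x}^\star)\|^2\to0$ and $\|\bm{u}^k-\bm{u}_b^\star\|^2\to0$ as $k\to\infty$, both almost surely and in quadratic mean. Moreover, with $\bar{\bm X}^K=\frac1K\sum_{k=0}^{K-1}\bm x^k$ and $\bar{\bm U}^K=\frac1K\sum_{k=0}^{K-1}\bm u^k$, there is a constant $C$ independent of $K$ (depending on $\alpha,L,p,B,\bm x^0,\bm x^\star,\bm u_b^\star$) such that $$\mathbb{E}\Big[\|\nabla F(\bar{\bm X}^K)-\nabla F(\bm x^\star)\|^2+\|\bar{\bm U}^K-\bm u_b^\star\|^2\Big]\le \frac{C}{K}\quad\text{for all }K\ge1.$$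
   Context: Standing assumptions: $f_1,\dots,f_n:\mathbb{R}^d\to\mathbb{R}$ are $\mu$-strongly convex with $\mu\ge0$ and $L$-smooth ($L>0$); $r:\mathbb{R}^d\to\mathbb{R}\cup\{\infty\}$ is proper, closed, convex. For $\bm{x}=\mathrm{col}\{x_1,\dots,x_n\}\in\mathbb{R}^{nd}$, $F(\bm{x})=\sum_i f_i(x_i)$, $R(\bm{x})=\sum_i r(x_i)$, $\mathrm{prox}_{\alpha r}(x)=\arg\min_s\{r(s)+\frac1{2\alpha}\|s-x\|^2\}$ and $\mathrm{prox}_{\alpha R}$ acts blockwise. $W\in\mathbb{R}^{n\times n}$ is symmetric, $W\bm1=\bm1$, $W_{ij}>0$ on edges of an undirected connected graph and $W_{ij}=0$ for non-adjacent $i\ne j$. $A,B$ are polynomials in $W$ with $A^{\sf T}=A$, $A\bm1=\bm1$, $B\succeq0$, $\mathrm{null}(B)=\mathrm{span}(\bm1)$, $I-A^2-B\succeq0$; $\bm A=A\otimes I_d$, $\bm B=B\otimes I_d$, $\sqrt{\bm B}=\sqrt B\otimes I_d$ (PSD square root). Algorithm (FlexATC, equivalent form): $\theta_0,\theta_1,\dots$ are i.i.d. in $\{0,1\}$ with $\mathrm{Prob}(\theta_k=1)=p$; $\bm{A}_k=\theta_k\bm{A}+(1-\theta_k)\bm{I}$ and $\sqrt{\bm{B}_k}=\theta_k\sqrt{\bm B}$. Given $\bm{x}^0\in\mathbb{R}^{nd}$ and $\bm{u}^0=\bm 0$, for $k\ge0$: $\bm{w}^k=\bm{x}^k-\alpha\nabla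 F(\bm{x}^k)$, $\bm{x}^{k+1}=\mathrm{prox}_{\alpha R}\big(\bm{A}_k(\bm{w}^k-\sqrt{\bm B}\bm{u}^k)\big)$, $\bm{u}^{k+1}=\bm{u}^k+p\sqrt{\bm B_k}(\bm w^k-\sqrt{\bm B}\bm u^k)$. *)

theory Defs
  imports "HOL-Probability.Probability" "HOL-Computational_Algebra.Polynomial"
begin

(* Agents are indexed by a finite type 'n (n = CARD('n)); local variables live in a
   Euclidean space 'v (= R^d).  A stacked vector col{x_1,...,x_n} in R^{nd} is an
   element of ('v)^'n; its norm is sqrt(sum_i |x_i|^2), i.e. the Euclidean norm of R^{nd}. *)

primrec matpow :: "real^'n^'n \<Rightarrow> nat \<Rightarrow> real^'n^'n" where
  "matpow W 0 = mat 1"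
| "matpow W (Suc k) = W ** matpow W k"

definition mat_poly :: "real poly \<Rightarrow> real^'n^'n \<Rightarrow> real^'n^'n" where
  "mat_poly q W = (\<Sum>k\<le>degree q. coeff q k *\<^sub>R matpow W k)"

definition is_poly_in :: "real^'n^'n \<Rightarrow> real^'n^'n \<Rightarrow> bool" where
  "is_poly_in A W \<longleftrightarrow> (\<exists>q. A = mat_poly q W)"

definition psd :: "real^'n^'n \<Rightarrow> bool" where
  "psd M \<longleftrightarrow> (\<forall>v. 0 \<le> v \<bullet> (M *v v))"

(* Kronecker action (M \<otimes> I_d) on stacked vectors *)
definition kron :: "real^'n^'n \<Rightarrow> 'v::real_vector^'n \<Rightarrow> 'v^'n" where
  "kron M x = (\<chi> i. \<Sum>j\<in>UNIV. (M $ i $ j) *\<^sub>R (x $ j))"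

definition strongly_convex :: "real \<Rightarrow> ('v::real_normed_vector \<Rightarrow> real) \<Rightarrow> bool" where
  "strongly_convex mu f \<longleftrightarrow>
     (\<forall>x y t. 0 \<le> t \<and> t \<le> 1 \<longrightarrow>
        f (t *\<^sub>R x + (1 - t) *\<^sub>R y) \<le> t * f x + (1 - t) * f y - mu / 2 * t * (1 - t) * norm (x - y)^2)"

definition is_gradient :: "('v::real_inner \<Rightarrow> real) \<Rightarrow> ('v \<Rightarrow> 'v) \<Rightarrow> bool" where
  "is_gradient f g \<longleftrightarrow> (\<forall>x. (f has_derivative (\<lambda>h. g x \<bullet> h)) (at x))"

definition smooth :: "real \<Rightarrow> ('v::real_inner \<Rightarrow> real) \<Rightarrow> ('v \<Rightarrow> 'v) \<Rightarrow> bool" where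
  "smooth L f g \<longleftrightarrow> is_gradient f g \<and> (\<forall>x y. norm (g x - g y) \<le> L * norm (x - y))"

definition ext_proper :: "('v \<Rightarrow> ereal) \<Rightarrow> bool" where
  "ext_proper r \<longleftrightarrow> (\<forall>x. r x \<noteq> -\<infinity>) \<and> (\<exists>x. r x < \<infinity>)"

definition ext_closed :: "('v::topological_space \<Rightarrow> ereal) \<Rightarrow> bool" where
  "ext_closed r \<longleftrightarrow> closed {(x, y::real). r x \<le> ereal y}"

definition ext_convex :: "('v::real_vector \<Rightarrow> ereal) \<Rightarrow> bool" where
  "ext_convex r \<longleftrightarrow> (\<forall>x y t. 0 \<le> t \<and> t \<le> 1 \<longrightarrow>
      r (t *\<^sub>R x + (1 - t) *\<^sub>R y) \<le> ereal t * r x + ereal (1 - t) * r y)"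

definition prox :: "real \<Rightarrow> ('v::real_normed_vector \<Rightarrow> ereal) \<Rightarrow> 'v \<Rightarrow> 'v" where
  "prox a r x = (SOME s. \<forall>t. r s + ereal (norm (s - x)^2 / (2 * a))
                               \<le> r t + ereal (norm (t - x)^2 / (2 * a)))"

definition gradF :: "('n \<Rightarrow> 'v \<Rightarrow> 'v) \<Rightarrow> 'v^'n \<Rightarrow> 'v^'n" where
  "gradF g x = (\<chi> i. g i (x $ i))"

definition proxR :: "real \<Rightarrow> ('v::real_normed_vector \<Rightarrow> ereal) \<Rightarrow> 'v^'n \<Rightarrow> 'v^'n" where
  "proxR a r x = (\<chi> i. prox a r (x $ i))"

(* FlexATC iterates (x^k, u^k) driven by a coin sequence th (th k = theta_k = 1);
   S is the PSD square root of B. *)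
fun flexatc :: "real^'n^'n \<Rightarrow> real^'n^'n \<Rightarrow> real \<Rightarrow> real \<Rightarrow> ('n \<Rightarrow> 'v \<Rightarrow> 'v)
      \<Rightarrow> ('v::real_normed_vector \<Rightarrow> ereal) \<Rightarrow> 'v^'n \<Rightarrow> (nat \<Rightarrow> bool) \<Rightarrow> nat \<Rightarrow> ('v^'n) \<times> ('v^'n)" where
  "flexatc A S a p g r x0 th 0 = (x0, 0)"
| "flexatc A S a p g r x0 th (Suc k) =
     (let (x, u) = flexatc A S a p g r x0 th k;
          w = x - a *\<^sub>R gradF g x;
          z = w - kron S u;
          Ak = (if th k then A else mat 1);
          Sk = (if th k then S else 0)
      in (proxR a r (kron Ak z), u + p *\<^sub>R kron Sk z))"

end

theory Submission
  imports Defs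
begin

text \<open>
  For a fixed coin outcome the algorithm applies one of two deterministic maps, a communication
  round \<open>comm_step\<close> (\<open>\<theta>\<^sub>k = 1\<close>) or a local round \<open>local_step\<close> (\<open>\<theta>\<^sub>k = 0\<close>). For the Lyapunov
  function \<open>V(x, u) = \<parallel>x - x\<^sup>*\<parallel>\<^sup>2 + \<parallel>u - u\<^sup>*\<parallel>\<^sup>2 / p\<^sup>2\<close>, nonexpansiveness of the prox, the
  co-coercivity of smooth convex gradients and \<open>I - A\<^sup>2 - B \<succeq> 0\<close> give
  \<open>p V(comm_step s) + (1 - p) V(local_step s) \<le> V s - \<Phi> s\<close>, where
  \<open>\<Phi>(x, u) = c\<^sub>1 D(x) + c\<^sub>0 \<parallel>\<nabla>F x - \<nabla>F x\<^sup>*\<parallel>\<^sup>2 + \<parallel>\<surd>B (u - u\<^sup>*)\<parallel>\<^sup>2\<close> and \<open>D\<close> is the Bregman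
  divergence of \<open>F\<close> at \<open>x\<^sup>*\<close>. As \<open>\<theta>\<^sub>k\<close> is independent of the past, \<open>E V\<^sub>k\<^sub>+\<^sub>1 \<le> E V\<^sub>k - E \<Phi>\<^sub>k\<close>,
  so \<open>\<Sum>\<^sub>k E \<Phi>\<^sub>k \<le> V(x\<^sub>0, 0)\<close>. Hence \<open>E \<Phi>\<^sub>k \<rightarrow> 0\<close>, and \<open>\<Sum>\<^sub>k \<Phi>\<^sub>k < \<infinity>\<close> almost surely, so
  \<open>\<Phi>\<^sub>k \<rightarrow> 0\<close> almost surely. Both errors are dominated by \<open>\<Phi>\<close>: the gradient error directly, the
  dual error because \<open>u\<^sub>k - u\<^sup>*\<close> stays in the range of \<open>\<surd>B\<close>, on which \<open>\<surd>B\<close> is bounded below.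
  The \<open>O(1/K)\<close> rate for the averages is Jensen's inequality for the convex functions \<open>D\<close> and
  \<open>\<parallel>\<cdot>\<parallel>\<^sup>2\<close>. Only the spectral conditions on \<open>A\<close>, \<open>B\<close> and \<open>\<surd>B\<close> enter.
\<close>

section \<open>The proximal operator\<close>

lemma ext_convex_epigraph:
  fixes r :: "'v::real_vector \<Rightarrow> ereal"
  assumes "ext_convex r"
  shows "convex {(x, y::real). r x \<le> ereal y}"
  unfolding convex_def
proof (intro ballI allI impI)
  fix p q :: "'v \<times> real" and u v :: real
  assume p: "p \<in> {(x, y). r x \<le> ereal y}" and q: "q \<in> {(x, y). r x \<le> ereal y}"
    and u: "0 \<le> u" and v: "0 \<le> v" and uv: "u + v = 1"
  obtain x1 y1 x2 y2 where pq: "p = (x1, y1)" "q = (x2, y2)" by force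
  have "r (u *\<^sub>R x1 + (1 - u) *\<^sub>R x2) \<le> ereal u * r x1 + ereal (1 - u) * r x2"
    using assms u v uv unfolding ext_convex_def by auto
  also have "\<dots> \<le> ereal u * ereal y1 + ereal (1 - u) * ereal y2"
    using u v uv p q pq by (intro add_mono ereal_mult_left_mono) auto
  finally show "u *\<^sub>R p + v *\<^sub>R q \<in> {(x, y). r x \<le> ereal y}"
    using pq uv by (simp add: eq_diff_eq [symmetric])
qed

lemma ext_affine_minorant:
  fixes r :: "'v::euclidean_space \<Rightarrow> ereal"
  assumes pr: "ext_proper r" and cl: "ext_closed r" and cv: "ext_convex r"
  obtains a c where "\<And>s. ereal (a \<bullet> s + c) \<le> r s"
proof -
  let ?E = "{(x, y::real). r x \<le> ereal y}"
  obtain s0 y0 where y0: "r s0 = ereal y0"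
    using pr unfolding ext_proper_def by (metis less_ereal.simps(2) real_of_ereal.elims)
  have "(s0, y0 - 1) \<notin> ?E" using y0 by auto
  then obtain a b where ab: "inner a (s0, y0 - 1) < b" "\<forall>z\<in>?E. inner a z > b"
    using separating_hyperplane_closed_point[OF ext_convex_epigraph[OF cv] cl[unfolded ext_closed_def]]
    by blast
  obtain a1 a2 where a: "a = (a1, a2)" by force
  have "b < a1 \<bullet> s0 + a2 * y0" using ab(2) a y0 by auto
  moreover have "a1 \<bullet> s0 + a2 * (y0 - 1) < b" using ab(1) a by auto
  ultimately have a2: "a2 > 0" by (simp add: algebra_simps)
  have "ereal ((- a1 /\<^sub>R a2) \<bullet> s + b / a2) \<le> r s" for s
  proof (cases "r s")
    case (real y)
    then have "b < a1 \<bullet> s + a2 * y" using ab(2) a by auto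
    then show ?thesis using real a2 by (simp add: field_simps inner_commute)
  next
    case MInf then show ?thesis using pr unfolding ext_proper_def by auto
  qed simp
  then show ?thesis using that by blast
qed

lemma closed_ext_sublevel_plus:
  fixes r :: "'v::t2_space \<Rightarrow> ereal"
  assumes pr: "ext_proper r" and cl: "ext_closed r" and q: "continuous_on UNIV q"
  shows "closed {s. r s + ereal (q s) \<le> y}"
proof (cases y)
  case (real \<beta>)
  have eq: "{s. r s + ereal (q s) \<le> y} = (\<lambda>s. (s, \<beta> - q s)) -` {(x, y::real). r x \<le> ereal y}"
  proof (rule set_eqI)
    fix s
    show "s \<in> {s. r s + ereal (q s) \<le> y} \<longleftrightarrow> s \<in> (\<lambda>s. (s, \<beta> - q s)) -` {(x, y). r x \<le> ereal y}"
      using real by (cases "r s") auto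
  qed
  have "continuous (at s) (\<lambda>s. (s, \<beta> - q s))" for s
    using q by (intro continuous_intros) (auto simp: continuous_on_eq_continuous_at)
  then show ?thesis unfolding eq
    by (intro continuous_closed_vimage) (use cl in \<open>auto simp: ext_closed_def\<close>)
next
  case MInf
  then have "{s. r s + ereal (q s) \<le> y} = {}" using pr by (auto simp: ext_proper_def)
  then show ?thesis by simp
qed simp

lemma closed_compact_sublevels_imp_attains_min:
  fixes \<phi> :: "'a::topological_space \<Rightarrow> 'b::linorder"
  assumes closed: "\<And>y. closed {s. \<phi> s \<le> y}" and compact: "compact {s. \<phi> s \<le> \<phi> s0}"
  obtains s where "\<And>t. \<phi> s \<le> \<phi> t"
proof -
  define K where "K = {s. \<phi> s \<le> \<phi> s0}"
  define F where "F = (\<lambda>t. {s. \<phi> s \<le> \<phi> t}) ` K"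
  have "K \<inter> \<Inter>F \<noteq> {}"
  proof (rule compact_imp_fip)
    fix F' assume F': "finite F'" "F' \<subseteq> F"
    then obtain T where T: "T \<subseteq> K" "finite T" "F' = (\<lambda>t. {s. \<phi> s \<le> \<phi> t}) ` T"
      unfolding F_def by (meson finite_subset_image)
    show "K \<inter> \<Inter>F' \<noteq> {}"
    proof (cases "T = {}")
      case True
      then show ?thesis using T by (auto simp: K_def)
    next
      case False
      have "Min (\<phi> ` T) \<in> \<phi> ` T" using T False by (intro Min_in) auto
      then obtain t0 where t0: "t0 \<in> T" "\<phi> t0 = Min (\<phi> ` T)" by auto
      have "\<phi> t0 \<le> \<phi> t" if "t \<in> T" for t
        using T(2) that t0(2) by simp
      then have "t0 \<in> K \<inter> \<Inter>F'" using T t0(1) by auto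
      then show ?thesis by blast
    qed
  qed (use compact closed in \<open>auto simp: K_def F_def\<close>)
  then obtain s where s: "s \<in> K" "\<And>t. t \<in> K \<Longrightarrow> \<phi> s \<le> \<phi> t" by (auto simp: F_def)
  have "\<phi> s \<le> \<phi> t" for t
  proof (cases "t \<in> K")
    case False
    then have "\<phi> s0 \<le> \<phi> t" by (auto simp: K_def)
    then show ?thesis using s(1) by (auto simp: K_def)
  qed (use s in auto)
  then show ?thesis using that by blast
qed

lemma quadratic_le_linear_bound:
  fixes d c b a :: real
  assumes "d\<^sup>2 / (2 * a) \<le> c + b * d" "0 < a" "0 \<le> d" "0 \<le> b"
  shows "d \<le> 1 + 2 * a * (\<bar>c\<bar> + b)"
proof (cases "d \<le> 1")
  case True
  have "0 \<le> 2 * a * (\<bar>c\<bar> + b)" using assms by simp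
  then show ?thesis using True by linarith
next
  case False
  have "d * d \<le> 2 * a * (c + b * d)" using assms
    by (simp add: power2_eq_square field_simps)
  also have "\<dots> \<le> 2 * a * ((\<bar>c\<bar> + b) * d)"
  proof -
    have "\<bar>c\<bar> \<le> \<bar>c\<bar> * d" using False by (simp add: mult_le_cancel_left1)
    then have "c + b * d \<le> (\<bar>c\<bar> + b) * d" using abs_ge_self[of c] by (simp add: algebra_simps)
    then show ?thesis using assms by simp
  qed
  finally have "d * d \<le> (2 * a * (\<bar>c\<bar> + b)) * d" by (simp add: algebra_simps)
  then have "d \<le> 2 * a * (\<bar>c\<bar> + b)" using False by simp
  then show ?thesis by simp
qed

lemma prox_minimizer_exists:
  fixes r :: "'v::euclidean_space \<Rightarrow> ereal"
  assumes pr: "ext_proper r" and cl: "ext_closed r" and cv: "ext_convex r" and a: "0 < a"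
  shows "\<exists>s. \<forall>t. r s + ereal (norm (s - x)^2 / (2 * a)) \<le> r t + ereal (norm (t - x)^2 / (2 * a))"
proof -
  define q where "q t = norm (t - x)^2 / (2 * a)" for t
  define \<phi> where "\<phi> t = r t + ereal (q t)" for t
  have qc: "continuous_on UNIV q" unfolding q_def using a by (intro continuous_intros) auto
  obtain av c where mino: "\<And>s. ereal (av \<bullet> s + c) \<le> r s" using ext_affine_minorant[OF pr cl cv] by blast
  obtain s0 y0 where y0: "r s0 = ereal y0"
    using pr unfolding ext_proper_def by (metis less_ereal.simps(2) real_of_ereal.elims)
  define c0 where "c0 = y0 + q s0"
  have phis0: "\<phi> s0 = ereal c0" unfolding \<phi>_def c0_def y0 by simp
  have closed: "closed {s. \<phi> s \<le> y}" for y
    unfolding \<phi>_def by (rule closed_ext_sublevel_plus[OF pr cl qc])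
  define R where "R = 1 + 2 * a * (\<bar>c0 - c - av \<bullet> x\<bar> + norm av)"
  have "norm (s - x) \<le> R" if "\<phi> s \<le> \<phi> s0" for s
  proof -
    have "ereal (av \<bullet> s + c) + ereal (q s) \<le> ereal c0"
      using that phis0 mino unfolding \<phi>_def by (metis add_right_mono order_trans)
    then have "av \<bullet> s + c + q s \<le> c0" by simp
    moreover have "av \<bullet> (s - x) \<ge> - (norm av * norm (s - x))"
      using Cauchy_Schwarz_ineq2[of av "s - x"] by (simp add: abs_le_iff)
    ultimately have "norm (s - x)^2 / (2 * a) \<le> (c0 - c - av \<bullet> x) + norm av * norm (s - x)"
      unfolding q_def by (simp add: inner_diff_right)
    then show ?thesis unfolding R_def using a by (intro quadratic_le_linear_bound) auto
  qed
  then have "{s. \<phi> s \<le> \<phi> s0} \<subseteq> cball x R" by (auto simp: dist_norm norm_minus_commute)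
  then have "compact {s. \<phi> s \<le> \<phi> s0}"
    using closed by (metis bounded_cball bounded_subset compact_eq_bounded_closed)
  then obtain s where "\<And>t. \<phi> s \<le> \<phi> t" using closed_compact_sublevels_imp_attains_min closed by blast
  then show ?thesis unfolding \<phi>_def q_def by blast
qed

lemma le_of_le_plus_small:
  fixes A B C :: real
  assumes "\<And>l. 0 < l \<Longrightarrow> l \<le> 1 \<Longrightarrow> A \<le> B + l * C"
  shows "A \<le> B"
proof (rule ccontr)
  assume AB: "\<not> A \<le> B"
  then have C: "C > 0" using assms[of 1] by fastforce
  define l where "l = min 1 ((A - B) / (2 * C))"
  have "l * C \<le> (A - B) / 2" unfolding l_def using C by (simp add: min_def field_simps)
  moreover have "0 < l" using AB C unfolding l_def by auto
  ultimately show False using assms[of l] AB unfolding l_def by auto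
qed

locale proximal =
  fixes r :: "'v::euclidean_space \<Rightarrow> ereal" and a :: real
  assumes proper: "ext_proper r" and closed: "ext_closed r" and convex: "ext_convex r"
    and pos: "0 < a"
begin

lemma prox_minimizes:
  "r (prox a r x) + ereal (norm (prox a r x - x)^2 / (2 * a)) \<le> r t + ereal (norm (t - x)^2 / (2 * a))"
  using someI_ex[OF prox_minimizer_exists[OF proper closed convex pos, of x]] unfolding prox_def by blast

lemma prox_finite: obtains y where "r (prox a r x) = ereal y"
proof -
  obtain t where t: "r t < \<infinity>" using proper unfolding ext_proper_def by auto
  have "r (prox a r x) + ereal (norm (prox a r x - x)^2 / (2 * a)) < \<infinity>"
    using prox_minimizes[of x t] t by (cases "r t") auto
  moreover have "r (prox a r x) \<noteq> -\<infinity>" using proper unfolding ext_proper_def by auto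
  ultimately show ?thesis using that by (cases "r (prox a r x)") auto
qed

text \<open>Comparing with the convex combination \<open>s + l (t - s)\<close> and letting \<open>l \<rightarrow> 0\<close>.\<close>
lemma prox_variational_ineq:
  assumes ys: "r (prox a r x) = ereal ys" and y: "r t = ereal y"
  shows "ys \<le> y + (prox a r x - x) \<bullet> (t - prox a r x) / a"
proof -
  define s where "s = prox a r x"
  have "ys \<le> y + (s - x) \<bullet> (t - s) / a + l * (norm (t - s)^2 / (2 * a))" if l: "0 < l" "l \<le> 1" for l
  proof -
    define m where "m = l *\<^sub>R t + (1 - l) *\<^sub>R s"
    have "r m \<le> ereal l * r t + ereal (1 - l) * r s"
      using convex l unfolding ext_convex_def m_def by auto
    then have rm: "r m \<le> ereal (l * y + (1 - l) * ys)" using y ys s_def by simp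
    have "ereal ys + ereal (norm (s - x)^2 / (2 * a)) \<le> r m + ereal (norm (m - x)^2 / (2 * a))"
      using prox_minimizes[of x m] ys s_def by simp
    also have "\<dots> \<le> ereal (l * y + (1 - l) * ys) + ereal (norm (m - x)^2 / (2 * a))"
      using rm by (intro add_mono) auto
    finally have min: "ys + norm (s - x)^2 / (2 * a) \<le> l * y + (1 - l) * ys + norm (m - x)^2 / (2 * a)"
      by simp
    have mx: "m - x = (s - x) + l *\<^sub>R (t - s)" unfolding m_def by (simp add: algebra_simps)
    have "norm (m - x)^2 = norm (s - x)^2 + 2 * l * ((s - x) \<bullet> (t - s)) + l^2 * norm (t - s)^2"
      unfolding mx power2_norm_eq_inner
      by (simp add: inner_add_left inner_add_right inner_diff_left inner_diff_right inner_commute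
          algebra_simps power2_eq_square)
    then have "norm (m - x)^2 / (2 * a)
        = norm (s - x)^2 / (2 * a) + l * ((s - x) \<bullet> (t - s) / a) + l * (l * (norm (t - s)^2 / (2 * a)))"
      using pos by (simp add: add_divide_distrib power2_eq_square)
    with min have "l * ys \<le> l * y + l * ((s - x) \<bullet> (t - s) / a) + l * (l * (norm (t - s)^2 / (2 * a)))"
      by (simp add: algebra_simps)
    then have "l * ys \<le> l * (y + (s - x) \<bullet> (t - s) / a + l * (norm (t - s)^2 / (2 * a)))"
      by (simp add: distrib_left)
    then show ?thesis using l by simp
  qed
  then show ?thesis unfolding s_def by (rule le_of_le_plus_small)
qed

lemma prox_nonexpansive: "norm (prox a r x1 - prox a r x2) \<le> norm (x1 - x2)"
proof -
  define s1 s2 where "s1 = prox a r x1" and "s2 = prox a r x2"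
  obtain y1 y2 where y: "r s1 = ereal y1" "r s2 = ereal y2"
    unfolding s1_def s2_def by (metis prox_finite)
  have "y1 \<le> y2 + (s1 - x1) \<bullet> (s2 - s1) / a" "y2 \<le> y1 + (s2 - x2) \<bullet> (s1 - s2) / a"
    using prox_variational_ineq y unfolding s1_def s2_def by auto
  then have "0 \<le> ((s1 - x1) \<bullet> (s2 - s1) + (s2 - x2) \<bullet> (s1 - s2)) / a"
    by (simp add: add_divide_distrib)
  then have "0 \<le> (s1 - x1) \<bullet> (s2 - s1) + (s2 - x2) \<bullet> (s1 - s2)"
    using pos by (simp add: zero_le_divide_iff)
  also have "\<dots> = (x1 - x2) \<bullet> (s1 - s2) - norm (s1 - s2)^2"
    unfolding power2_norm_eq_inner by (simp add: inner_diff_left inner_diff_right inner_commute)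
  finally have "norm (s1 - s2)^2 \<le> (x1 - x2) \<bullet> (s1 - s2)" by simp
  also have "\<dots> \<le> norm (x1 - x2) * norm (s1 - s2)" by (rule norm_cauchy_schwarz)
  finally have "norm (s1 - s2) \<le> norm (x1 - x2)"
    by (cases "s1 = s2") (auto simp: power2_eq_square mult_le_cancel_right)
  then show ?thesis unfolding s1_def s2_def .
qed

end

section \<open>Smooth convex functions\<close>

lemma strongly_convex_imp_convex_on:
  assumes "strongly_convex mu f" "0 \<le> mu"
  shows "convex_on UNIV f"
proof (rule convex_onI)
  fix t :: real and x y assume t: "0 < t" "t < 1"
  have "f ((1 - t) *\<^sub>R x + (1 - (1 - t)) *\<^sub>R y)
      \<le> (1 - t) * f x + (1 - (1 - t)) * f y - mu / 2 * (1 - t) * (1 - (1 - t)) * norm (x - y)^2"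
    using assms(1)[unfolded strongly_convex_def, rule_format, where t = "1 - t" and x = x and y = y] t by simp
  moreover have "0 \<le> mu / 2 * (1 - t) * (1 - (1 - t)) * norm (x - y)^2"
    using assms(2) t by simp
  ultimately show "f ((1 - t) *\<^sub>R x + t *\<^sub>R y) \<le> (1 - t) * f x + t * f y" by simp
qed simp

lemma is_gradient_line_derivative:
  fixes f :: "'v::real_inner \<Rightarrow> real"
  assumes "is_gradient f g"
  shows "((\<lambda>t. f (x + t *\<^sub>R v)) has_real_derivative (g (x + t *\<^sub>R v) \<bullet> v)) (at t)"
proof -
  have "((\<lambda>t. x + t *\<^sub>R v) has_derivative (\<lambda>h. h *\<^sub>R v)) (at t)"
    by (auto intro!: derivative_eq_intros)
  moreover have "(f has_derivative (\<lambda>h. g (x + t *\<^sub>R v) \<bullet> h)) (at (x + t *\<^sub>R v))"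
    using assms unfolding is_gradient_def by blast
  ultimately have "((\<lambda>t. f (x + t *\<^sub>R v)) has_derivative (\<lambda>h. g (x + t *\<^sub>R v) \<bullet> (h *\<^sub>R v))) (at t)"
    by (rule has_derivative_compose)
  moreover have "(\<lambda>h. g (x + t *\<^sub>R v) \<bullet> (h *\<^sub>R v)) = (*) (g (x + t *\<^sub>R v) \<bullet> v)"
    by (auto simp: fun_eq_iff)
  ultimately show ?thesis unfolding has_field_derivative_def by simp
qed

lemma convex_on_line:
  assumes "convex_on UNIV f"
  shows "convex_on UNIV (\<lambda>t. f (x + t *\<^sub>R v))"
proof (rule convex_onI)
  fix t a b :: real assume "0 < t" "t < 1"
  have "x + ((1 - t) *\<^sub>R a + t *\<^sub>R b) *\<^sub>R v = (1 - t) *\<^sub>R (x + a *\<^sub>R v) + t *\<^sub>R (x + b *\<^sub>R v)"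
    by (simp add: algebra_simps)
  then show "f (x + ((1 - t) *\<^sub>R a + t *\<^sub>R b) *\<^sub>R v) \<le> (1 - t) * f (x + a *\<^sub>R v) + t * f (x + b *\<^sub>R v)"
    using convex_onD[OF assms] \<open>0 < t\<close> \<open>t < 1\<close> by simp
qed simp

lemma convex_gradient_inequality:
  fixes f :: "'v::real_inner \<Rightarrow> real"
  assumes "convex_on UNIV f" and "is_gradient f g"
  shows "f x + g x \<bullet> (y - x) \<le> f y"
proof -
  have "g x \<bullet> (y - x) * (1 - 0) \<le> f (x + 1 *\<^sub>R (y - x)) - f (x + 0 *\<^sub>R (y - x))"
    by (rule convex_on_imp_above_tangent[OF convex_on_line[OF assms(1)] connected_UNIV])
      (use is_gradient_line_derivative[OF assms(2), of x "y - x" 0] in auto)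
  then show ?thesis by simp
qed

lemma smooth_descent_lemma:
  fixes f :: "'v::real_inner \<Rightarrow> real"
  assumes "smooth L f g"
  shows "f y \<le> f x + g x \<bullet> (y - x) + L / 2 * norm (y - x)^2"
proof -
  define v where "v = y - x"
  have gr: "is_gradient f g" and lip: "\<And>a b. norm (g a - g b) \<le> L * norm (a - b)"
    using assms unfolding smooth_def by auto
  define \<psi> where "\<psi> t = f (x + t *\<^sub>R v) - t * (g x \<bullet> v) - L / 2 * t^2 * norm v ^2" for t
  have der: "DERIV \<psi> t :> g (x + t *\<^sub>R v) \<bullet> v - g x \<bullet> v - L * t * norm v ^2" for t
    unfolding \<psi>_def using is_gradient_line_derivative[OF gr, of x v t]
    by (auto intro!: derivative_eq_intros simp: power2_eq_square)
  have nonpos: "g (x + t *\<^sub>R v) \<bullet> v - g x \<bullet> v - L * t * norm v ^2 \<le> 0" if "0 \<le> t" for t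
  proof -
    have "g (x + t *\<^sub>R v) \<bullet> v - g x \<bullet> v \<le> norm (g (x + t *\<^sub>R v) - g x) * norm v"
      by (metis inner_diff_left norm_cauchy_schwarz)
    also have "\<dots> \<le> (L * norm (t *\<^sub>R v)) * norm v"
      using lip[of "x + t *\<^sub>R v" x] by (intro mult_right_mono) auto
    also have "\<dots> = L * t * norm v ^2" using that by (simp add: power2_eq_square)
    finally show ?thesis by simp
  qed
  have "\<psi> 1 \<le> \<psi> 0"
  proof (rule DERIV_nonpos_imp_nonincreasing[of 0 1])
    fix t :: real assume "0 \<le> t" "t \<le> 1"
    then show "\<exists>y. DERIV \<psi> t :> y \<and> y \<le> 0" using der[of t] nonpos[of t] by blast
  qed simp
  then show ?thesis unfolding \<psi>_def v_def by (simp add: algebra_simps)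
qed

text \<open>Apply the gradient inequality at \<open>z = y - (\<nabla>f y - \<nabla>f x) / L\<close> and the descent lemma
  between \<open>y\<close> and \<open>z\<close>.\<close>
lemma smooth_convex_cocoercive_bound:
  fixes f :: "'v::real_inner \<Rightarrow> real"
  assumes cv: "convex_on UNIV f" and sm: "smooth L f g" and L: "0 < L"
  shows "f x + g x \<bullet> (y - x) + norm (g y - g x)^2 / (2 * L) \<le> f y"
proof -
  have gr: "is_gradient f g" using sm unfolding smooth_def by auto
  define w where "w = g y - g x"
  define z where "z = y - (1 / L) *\<^sub>R w"
  have 1: "f x + g x \<bullet> (z - x) \<le> f z" by (rule convex_gradient_inequality[OF cv gr])
  have 2: "f z \<le> f y + g y \<bullet> (z - y) + L / 2 * norm (z - y)^2" by (rule smooth_descent_lemma[OF sm])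
  have zy: "z - y = - ((1 / L) *\<^sub>R w)" unfolding z_def by simp
  have "norm (z - y)^2 = (1/L)^2 * norm w ^2" unfolding zy using L by (simp add: power_divide field_simps)
  then have 3: "L / 2 * norm (z - y)^2 = norm w^2 / (2 * L)" using L by (simp add: power2_eq_square field_simps)
  have 4: "g y \<bullet> (z - y) = - (g y \<bullet> w) / L" unfolding zy by (simp add: inner_minus_right)
  have 5: "g x \<bullet> (z - x) = g x \<bullet> (y - x) - (g x \<bullet> w) / L"
    unfolding z_def by (simp add: inner_diff_right)
  have "f x + g x \<bullet> (y - x) - (g x \<bullet> w) / L \<le> f y - (g y \<bullet> w) / L + norm w^2 / (2 * L)"
    using 1 2 3 4 5 by linarith
  moreover have "(g y \<bullet> w) / L - (g x \<bullet> w) / L = norm w ^2 / L"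
    unfolding w_def power2_norm_eq_inner by (simp add: inner_diff_left diff_divide_distrib[symmetric])
  moreover have "norm w^2 / L = norm w^2 / (2 * L) + norm w^2 / (2 * L)" by (simp add: field_simps)
  ultimately show ?thesis unfolding w_def by linarith
qed

lemma convex_on_norm_power2: "convex_on UNIV (\<lambda>y :: 'a::real_inner. norm y ^2)"
proof (rule convex_onI)
  fix t :: real and x y :: 'a
  assume "0 < t" "t < 1"
  have "(1 - t) * norm x^2 + t * norm y^2 - norm ((1 - t) *\<^sub>R x + t *\<^sub>R y)^2 = t * (1 - t) * norm (x - y)^2"
    unfolding power2_norm_eq_inner
    by (simp add: inner_add_left inner_add_right inner_diff_left inner_diff_right inner_commute
        algebra_simps power2_eq_square)
  moreover have "0 \<le> t * (1 - t) * norm (x - y)^2" using \<open>0 < t\<close> \<open>t < 1\<close> by simp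
  ultimately show "norm ((1 - t) *\<^sub>R x + t *\<^sub>R y)^2 \<le> (1 - t) * norm x^2 + t * norm y^2" by linarith
qed simp

section \<open>Kronecker products with the identity\<close>

lemma kron_nth: "kron M x $ i = (\<Sum>j\<in>UNIV. (M $ i $ j) *\<^sub>R (x $ j))"
  unfolding kron_def by simp

lemma kron_add: "kron M (x + y) = kron M x + kron M y"
  by (simp add: vec_eq_iff kron_nth scaleR_add_right sum.distrib)

lemma kron_diff: "kron M (x - y) = kron M x - kron M y"
  by (simp add: vec_eq_iff kron_nth scaleR_diff_right sum_subtractf)

lemma kron_scaleR: "kron M (c *\<^sub>R x) = c *\<^sub>R kron M x"
  by (simp add: vec_eq_iff kron_nth scaleR_sum_right mult.commute)

lemma kron_zero: "kron M 0 = 0"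
  by (simp add: vec_eq_iff kron_nth)

lemma linear_kron: "linear (kron M)"
  by (rule linearI) (simp_all add: kron_add kron_scaleR)

lemma kron_mat_1: "kron (mat 1) x = x"
proof -
  have "(\<Sum>j\<in>UNIV. (mat 1 $ i $ j) *\<^sub>R (x $ j)) = x $ i" for i
  proof -
    have "(\<lambda>j. (mat 1 $ i $ j) *\<^sub>R (x $ j)) = (\<lambda>j. if i = j then x $ j else 0)"
      by (auto simp: mat_def)
    then show ?thesis by (simp only:) simp
  qed
  then show ?thesis by (simp add: vec_eq_iff kron_nth)
qed

lemma kron_mat_0: "kron 0 x = 0"
  by (simp add: vec_eq_iff kron_nth)

lemma kron_diff_left: "kron (M - N) x = kron M x - kron N x"
  by (simp add: vec_eq_iff kron_nth scaleR_diff_left sum_subtractf)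

lemma kron_matrix_mult: "kron (M ** N) x = kron M (kron N x)"
proof -
  have "(\<Sum>j\<in>UNIV. (\<Sum>k\<in>UNIV. M $ i $ k * N $ k $ j) *\<^sub>R x $ j)
      = (\<Sum>k\<in>UNIV. M $ i $ k *\<^sub>R (\<Sum>j\<in>UNIV. N $ k $ j *\<^sub>R x $ j))" for i
  proof -
    have "(\<Sum>j\<in>UNIV. (\<Sum>k\<in>UNIV. M $ i $ k * N $ k $ j) *\<^sub>R x $ j)
        = (\<Sum>j\<in>UNIV. \<Sum>k\<in>UNIV. M $ i $ k *\<^sub>R (N $ k $ j *\<^sub>R x $ j))"
      by (simp add: scaleR_sum_left)
    also have "\<dots> = (\<Sum>k\<in>UNIV. \<Sum>j\<in>UNIV. M $ i $ k *\<^sub>R (N $ k $ j *\<^sub>R x $ j))"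
      by (rule sum.swap)
    finally show ?thesis by (simp add: scaleR_sum_right)
  qed
  then show ?thesis by (simp add: vec_eq_iff kron_nth matrix_matrix_mult_def)
qed

lemma kron_inner_transpose: "kron M x \<bullet> y = x \<bullet> kron (transpose M) y"
proof -
  have "kron M x \<bullet> y = (\<Sum>i\<in>UNIV. \<Sum>j\<in>UNIV. M $ i $ j * (x $ j \<bullet> y $ i))"
    by (simp add: inner_vec_def kron_nth inner_sum_left)
  also have "\<dots> = (\<Sum>j\<in>UNIV. \<Sum>i\<in>UNIV. M $ i $ j * (x $ j \<bullet> y $ i))"
    by (rule sum.swap)
  also have "\<dots> = x \<bullet> kron (transpose M) y"
    by (simp add: inner_vec_def kron_nth inner_sum_right transpose_def)
  finally show ?thesis .
qed

lemma kron_inner_symmetric: "transpose M = M \<Longrightarrow> kron M x \<bullet> y = x \<bullet> kron M y"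
  using kron_inner_transpose[of M x y] by simp

lemma norm_kron_power2: "transpose M = M \<Longrightarrow> norm (kron M z)^2 = z \<bullet> kron (M ** M) z"
  unfolding power2_norm_eq_inner kron_matrix_mult by (simp add: kron_inner_symmetric)

text \<open>Coordinatewise in an orthonormal basis of \<open>'v\<close>, \<open>x \<bullet> kron M x\<close> is a sum of quadratic
  forms of \<open>M\<close>.\<close>
lemma psd_kron_nonneg:
  fixes x :: "'v::euclidean_space ^ 'n::finite"
  assumes "psd M"
  shows "0 \<le> x \<bullet> kron M x"
proof -
  define c where "c b = (\<chi> i. x $ i \<bullet> b)" for b :: 'v
  have "x \<bullet> kron M x = (\<Sum>i\<in>UNIV. \<Sum>j\<in>UNIV. M $ i $ j * (x $ i \<bullet> x $ j))"
    by (simp add: inner_vec_def kron_nth inner_sum_right)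
  also have "\<dots> = (\<Sum>i\<in>UNIV. \<Sum>j\<in>UNIV. M $ i $ j * (\<Sum>b\<in>Basis. (x $ i \<bullet> b) * (x $ j \<bullet> b)))"
    by (rule sum.cong[OF refl])+ (rule arg_cong[OF euclidean_inner])
  also have "\<dots> = (\<Sum>i\<in>UNIV. \<Sum>j\<in>UNIV. \<Sum>b\<in>Basis. M $ i $ j * ((x $ i \<bullet> b) * (x $ j \<bullet> b)))"
    by (simp only: sum_distrib_left)
  also have "\<dots> = (\<Sum>i\<in>UNIV. \<Sum>b\<in>Basis. \<Sum>j\<in>UNIV. M $ i $ j * ((x $ i \<bullet> b) * (x $ j \<bullet> b)))"
    by (rule sum.cong[OF refl], rule sum.swap)
  also have "\<dots> = (\<Sum>b\<in>Basis. \<Sum>i\<in>UNIV. \<Sum>j\<in>UNIV. M $ i $ j * ((x $ i \<bullet> b) * (x $ j \<bullet> b)))"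
    by (rule sum.swap)
  also have "\<dots> = (\<Sum>b\<in>Basis. c b \<bullet> (M *v c b))"
    by (simp add: c_def inner_vec_def matrix_vector_mult_def sum_distrib_left mult_ac)
  also have "\<dots> \<ge> 0" using assms unfolding psd_def by (intro sum_nonneg) auto
  finally show ?thesis .
qed

lemma kron_consensus_fixed:
  fixes z :: "'v::euclidean_space ^ 'n::finite"
  assumes B_null: "{v. B *v v = 0} = span {vec 1}" and A_stoch: "A *v vec 1 = vec 1"
    and Bz: "kron B z = 0"
  shows "kron A z = z"
proof -
  have consensus: "z $ i = z $ j" for i j
  proof (rule euclidean_eqI)
    fix b :: 'v assume b: "b \<in> Basis"
    define c where "c = (\<chi> i. z $ i \<bullet> b)"
    have "(B *v c) $ i = kron B z $ i \<bullet> b" for i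
      by (simp add: c_def matrix_vector_mult_def kron_nth inner_sum_left)
    then have "B *v c = 0" using Bz by (simp add: vec_eq_iff)
    then obtain t where "c = t *\<^sub>R vec 1" using B_null by (auto simp: span_singleton)
    then show "z $ i \<bullet> b = z $ j \<bullet> b" unfolding c_def by (simp add: vec_eq_iff)
  qed
  have row_sum: "(\<Sum>j\<in>UNIV. A $ i $ j) = 1" for i
    using A_stoch by (simp add: vec_eq_iff matrix_vector_mult_def)
  have "kron A z $ i = z $ i" for i
  proof -
    have "kron A z $ i = (\<Sum>j\<in>UNIV. A $ i $ j *\<^sub>R z $ i)"
      unfolding kron_nth by (rule sum.cong[OF refl]) (metis consensus)
    then show ?thesis by (simp add: scaleR_sum_left[symmetric] row_sum)
  qed
  then show ?thesis by (simp add: vec_eq_iff)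
qed

lemma self_adjoint_bounded_below_on_range:
  fixes T :: "'a::euclidean_space \<Rightarrow> 'a"
  assumes lin: "linear T" and sym: "\<And>x y. T x \<bullet> y = x \<bullet> T y"
  obtains e where "e > 0" "\<And>y. y \<in> range T \<Longrightarrow> e * norm y \<le> norm (T y)"
proof -
  have sub: "subspace (range T)" using linear_subspace_image[OF lin subspace_UNIV] by simp
  have bl: "bounded_linear T" using lin by (simp add: linear_conv_bounded_linear)
  have "\<forall>y\<in>range T. T y = 0 \<longrightarrow> y = 0"
  proof (intro ballI impI)
    fix y assume y: "y \<in> range T" and Ty: "T y = 0"
    obtain z where "y = T z" using y by blast
    then have "y \<bullet> y = z \<bullet> T y" using sym by simp
    then show "y = 0" using Ty by simp
  qed
  from injective_imp_isometric[OF closed_subspace[OF sub] sub bl this]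
  obtain e where "e > 0" "\<forall>y\<in>range T. e * norm y \<le> norm (T y)" by blast
  then show ?thesis using that by blast
qed

section \<open>The deterministic step and its Lyapunov decrease\<close>

lemma norm_vec_power2: "norm (x :: 'a::real_inner ^ 'n::finite)^2 = (\<Sum>i\<in>UNIV. norm (x $ i)^2)"
  by (simp add: power2_norm_eq_inner inner_vec_def)

lemma flexatc_cong:
  "(\<And>j. j < k \<Longrightarrow> th j = th' j) \<Longrightarrow> flexatc A S a p g r x0 th k = flexatc A S a p g r x0 th' k"
proof (induction k)
  case (Suc k)
  then have "flexatc A S a p g r x0 th k = flexatc A S a p g r x0 th' k" and "th k = th' k" by simp_all
  then show ?case by (simp only: flexatc.simps)
qed simp

locale flexatc_fixed_point =
  fixes f :: "'n::finite \<Rightarrow> 'v::euclidean_space \<Rightarrow> real"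
    and g :: "'n \<Rightarrow> 'v \<Rightarrow> 'v"
    and r :: "'v \<Rightarrow> ereal"
    and mu L alpha p :: real
    and A B S :: "real^'n^'n"
    and xs ws us :: "'v^'n"
  assumes mu: "0 \<le> mu" and L: "0 < L"
    and f_cvx: "\<forall>i. strongly_convex mu (f i)"
    and f_smooth: "\<forall>i. smooth L (f i) (g i)"
    and r_proper: "ext_proper r" and r_closed: "ext_closed r" and r_convex: "ext_convex r"
    and A_sym: "transpose A = A"
    and A_stoch: "A *v vec 1 = vec 1"
    and B_null: "{v. B *v v = 0} = span {vec 1}"
    and IAB_psd: "psd (mat 1 - A ** A - B)"
    and S_sqrt: "transpose S = S \<and> psd S \<and> S ** S = B"
    and alpha: "0 < alpha \<and> alpha < 2 / L"
    and p: "0 < p \<and> p \<le> 1"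
    and fix_w: "ws = xs - alpha *\<^sub>R gradF g xs"
    and fix_x: "xs = proxR alpha r (kron A (ws - kron S us))"
    and fix_u: "0 = kron S (ws - kron S us)"
    and us_range: "us \<in> range (kron S)"
begin

definition prox_arg :: "'v^'n \<Rightarrow> 'v^'n \<Rightarrow> 'v^'n" where
  "prox_arg x u = (x - alpha *\<^sub>R gradF g x) - kron S u"

definition comm_step :: "('v^'n) \<times> ('v^'n) \<Rightarrow> ('v^'n) \<times> ('v^'n)" where
  "comm_step s = (proxR alpha r (kron A (prox_arg (fst s) (snd s))),
                  snd s + p *\<^sub>R kron S (prox_arg (fst s) (snd s)))"

definition local_step :: "('v^'n) \<times> ('v^'n) \<Rightarrow> ('v^'n) \<times> ('v^'n)" where
  "local_step s = (proxR alpha r (prox_arg (fst s) (snd s)), snd s)"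

definition lyapunov :: "('v^'n) \<times> ('v^'n) \<Rightarrow> real" where
  "lyapunov s = norm (fst s - xs)^2 + (1 / p^2) * norm (snd s - us)^2"

definition Fsum :: "'v^'n \<Rightarrow> real" where
  "Fsum x = (\<Sum>i\<in>UNIV. f i (x $ i))"

definition bregman :: "'v^'n \<Rightarrow> real" where
  "bregman x = Fsum x - Fsum xs - gradF g xs \<bullet> (x - xs)"

definition c1 :: real where "c1 = alpha * (2 - alpha * L)"

definition c0 :: real where "c0 = c1 / (2 * L)"

definition decrease :: "('v^'n) \<times> ('v^'n) \<Rightarrow> real" where
  "decrease s = c1 * bregman (fst s) + c0 * norm (gradF g (fst s) - gradF g xs)^2
                + norm (kron S (snd s - us))^2"

lemma flexatc_Suc_step:
  "flexatc A S alpha p g r x0 th (Suc k)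
     = (if th k then comm_step else local_step) (flexatc A S alpha p g r x0 th k)"
  by (simp add: Let_def comm_step_def local_step_def prox_arg_def kron_mat_1 kron_mat_0
      split: prod.split)

lemma c1_pos: "0 < c1" and c0_pos: "0 < c0"
proof -
  have "alpha * L < 2" using alpha L by (simp add: field_simps)
  then show "0 < c1" "0 < c0" unfolding c1_def c0_def using alpha L by auto
qed

lemma S_sym: "transpose S = S" and S_square: "S ** S = B"
  using S_sqrt by auto

lemma proxR_nonexpansive: "norm (proxR alpha r x - proxR alpha r y) \<le> norm (x - y)"
proof -
  interpret proximal r alpha using r_proper r_closed r_convex alpha by unfold_locales auto
  have "norm (proxR alpha r x - proxR alpha r y)^2 \<le> norm (x - y)^2"
    unfolding norm_vec_power2 proxR_def
    by (intro sum_mono power_mono) (auto intro: prox_nonexpansive)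
  then show ?thesis by (simp add: power_mono_iff)
qed

lemma convex_on_Fsum: "convex_on UNIV Fsum"
proof (rule convex_onI)
  fix t :: real and x y :: "'v^'n" assume "0 < t" "t < 1"
  then have "f i (((1 - t) *\<^sub>R x + t *\<^sub>R y) $ i) \<le> (1 - t) * f i (x $ i) + t * f i (y $ i)" for i
    using convex_onD[OF strongly_convex_imp_convex_on[OF spec[OF f_cvx] mu]] by simp
  then have "Fsum ((1 - t) *\<^sub>R x + t *\<^sub>R y) \<le> (\<Sum>i\<in>UNIV. (1 - t) * f i (x $ i) + t * f i (y $ i))"
    unfolding Fsum_def by (rule sum_mono)
  also have "\<dots> = (1 - t) * Fsum x + t * Fsum y"
    unfolding Fsum_def by (simp add: sum.distrib sum_distrib_left)
  finally show "Fsum ((1 - t) *\<^sub>R x + t *\<^sub>R y) \<le> (1 - t) * Fsum x + t * Fsum y" .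
qed simp

lemma Fsum_cocoercive_bound:
  "Fsum x + gradF g x \<bullet> (y - x) + norm (gradF g y - gradF g x)^2 / (2 * L) \<le> Fsum y"
proof -
  have "f i (x $ i) + g i (x $ i) \<bullet> (y $ i - x $ i) + norm (g i (y $ i) - g i (x $ i))^2 / (2 * L)
      \<le> f i (y $ i)" for i
    using strongly_convex_imp_convex_on[OF spec[OF f_cvx, of i] mu] spec[OF f_smooth, of i] L
    by (rule smooth_convex_cocoercive_bound)
  then have "(\<Sum>i\<in>UNIV. f i (x $ i) + g i (x $ i) \<bullet> (y $ i - x $ i)
      + norm (g i (y $ i) - g i (x $ i))^2 / (2 * L)) \<le> (\<Sum>i\<in>UNIV. f i (y $ i))"
    by (rule sum_mono)
  then show ?thesis
    unfolding Fsum_def gradF_def inner_vec_def norm_vec_power2 sum.distrib sum_divide_distrib[symmetric]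
    by simp
qed

lemma bregman_lower_bound: "norm (gradF g x - gradF g xs)^2 / (2 * L) \<le> bregman x"
  using Fsum_cocoercive_bound[of xs x] unfolding bregman_def by simp

lemma bregman_nonneg: "0 \<le> bregman x"
proof -
  have "0 \<le> norm (gradF g x - gradF g xs)^2 / (2 * L)" using L by simp
  then show ?thesis using bregman_lower_bound by (rule order_trans)
qed

lemma convex_on_bregman: "convex_on UNIV bregman"
proof (rule convex_onI)
  fix t :: real and x y :: "'v^'n" assume "0 < t" "t < 1"
  have "gradF g xs \<bullet> ((1 - t) *\<^sub>R x + t *\<^sub>R y - xs)
      = (1 - t) * (gradF g xs \<bullet> (x - xs)) + t * (gradF g xs \<bullet> (y - xs))"
    by (simp add: inner_diff_right inner_add_right algebra_simps)
  moreover have "(1 - t) * bregman x + t * bregman y = (1 - t) * Fsum x + t * Fsum y - Fsum xs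
      - ((1 - t) * (gradF g xs \<bullet> (x - xs)) + t * (gradF g xs \<bullet> (y - xs)))"
    unfolding bregman_def by (simp add: algebra_simps)
  moreover have "Fsum ((1 - t) *\<^sub>R x + t *\<^sub>R y) \<le> (1 - t) * Fsum x + t * Fsum y"
    using convex_onD[OF convex_on_Fsum, of t x y] \<open>0 < t\<close> \<open>t < 1\<close> by simp
  ultimately show "bregman ((1 - t) *\<^sub>R x + t *\<^sub>R y) \<le> (1 - t) * bregman x + t * bregman y"
    unfolding bregman_def[of "(1 - t) *\<^sub>R x + t *\<^sub>R y"] by linarith
qed simp

lemma decrease_nonneg: "0 \<le> decrease s"
  unfolding decrease_def using bregman_nonneg c1_pos c0_pos by simp

lemma decrease_bounds:
  "norm (kron S (snd s - us))^2 \<le> decrease s"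
  "norm (gradF g (fst s) - gradF g xs)^2 \<le> decrease s / c0"
  "bregman (fst s) \<le> decrease s / c1"
proof -
  have B: "0 \<le> c1 * bregman (fst s)" using c1_pos bregman_nonneg by simp
  have G: "0 \<le> c0 * norm (gradF g (fst s) - gradF g xs)^2" using c0_pos by simp
  show "norm (kron S (snd s - us))^2 \<le> decrease s"
    using B G unfolding decrease_def by linarith
  have "c0 * norm (gradF g (fst s) - gradF g xs)^2 \<le> decrease s"
    using B unfolding decrease_def by simp
  then show "norm (gradF g (fst s) - gradF g xs)^2 \<le> decrease s / c0"
    by (simp add: pos_le_divide_eq[OF c0_pos] mult.commute)
  have "c1 * bregman (fst s) \<le> decrease s"
    using G unfolding decrease_def by simp
  then show "bregman (fst s) \<le> decrease s / c1"
    by (simp add: pos_le_divide_eq[OF c1_pos] mult.commute)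
qed

text \<open>Co-coercivity of \<open>\<nabla>F\<close>, applied in both directions, makes the gradient step a
  contraction up to the decrease terms.\<close>
lemma gradient_step_bound:
  "norm ((x - alpha *\<^sub>R gradF g x) - ws)^2
     \<le> norm (x - xs)^2 - c1 * bregman x - c0 * norm (gradF g x - gradF g xs)^2"
proof -
  define d where "d = gradF g x - gradF g xs"
  define N where "N = norm d ^2"
  define D where "D = bregman x"
  define D' where "D' = Fsum xs - Fsum x - gradF g x \<bullet> (xs - x)"
  have hD: "N / (2 * L) \<le> D" using bregman_lower_bound unfolding D_def N_def d_def .
  have hD': "N / (2 * L) \<le> D'"
    using Fsum_cocoercive_bound[of x xs] unfolding D'_def N_def d_def by (simp add: norm_minus_commute)
  have DD': "D + D' = (x - xs) \<bullet> d" unfolding D_def D'_def bregman_def d_def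
    by (simp add: inner_diff_left inner_diff_right inner_commute)
  have wd: "(x - alpha *\<^sub>R gradF g x) - ws = (x - xs) - alpha *\<^sub>R d"
    unfolding fix_w d_def by (simp add: algebra_simps)
  have "norm ((x - xs) - alpha *\<^sub>R d)^2 = norm (x - xs)^2 - 2 * alpha * ((x - xs) \<bullet> d) + alpha^2 * N"
    unfolding N_def power2_norm_eq_inner
    by (simp add: inner_diff_left inner_diff_right inner_commute power2_eq_square)
  moreover have "- 2 * alpha * ((x - xs) \<bullet> d) + alpha^2 * N \<le> - c1 * D - c0 * N"
  proof -
    have "alpha^2 * L * (N / (2 * L)) \<le> alpha^2 * L * D" using hD L by (intro mult_left_mono) auto
    moreover have "2 * alpha * (N / (2 * L)) \<le> 2 * alpha * D'" using hD' alpha by (intro mult_left_mono) auto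
    moreover have "alpha^2 * L * (N / (2 * L)) = alpha^2 * N / 2" "2 * alpha * (N / (2 * L)) = alpha * N / L"
      "c0 * N = alpha * N / L - alpha^2 * N / 2" "c1 * D = 2 * alpha * D - alpha^2 * L * D"
      unfolding c0_def c1_def using L by (simp_all add: field_simps power2_eq_square)
    moreover have "- 2 * alpha * ((x - xs) \<bullet> d) = - 2 * alpha * D - 2 * alpha * D'"
      using DD'[symmetric] by (simp add: algebra_simps)
    ultimately show ?thesis by linarith
  qed
  ultimately show ?thesis unfolding wd D_def N_def d_def by linarith
qed

lemma prox_arg_fixed: "prox_arg xs us = ws - kron S us"
  unfolding prox_arg_def fix_w ..

lemma xs_fixed_comm: "proxR alpha r (kron A (prox_arg xs us)) = xs"
  using fix_x prox_arg_fixed by simp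

lemma kron_S_prox_arg_fixed: "kron S (prox_arg xs us) = 0"
  using fix_u prox_arg_fixed by simp

text \<open>\<open>\<surd>B (w\<^sup>* - \<surd>B u\<^sup>*) = 0\<close> puts \<open>w\<^sup>* - \<surd>B u\<^sup>*\<close> in the consensus subspace, which \<open>A\<close> fixes;
  so \<open>x\<^sup>*\<close> is also a fixed point of the local step.\<close>
lemma xs_fixed_local: "proxR alpha r (prox_arg xs us) = xs"
proof -
  have "kron B (prox_arg xs us) = 0"
    unfolding S_square[symmetric] kron_matrix_mult kron_S_prox_arg_fixed kron_zero ..
  then have "kron A (prox_arg xs us) = prox_arg xs us" by (rule kron_consensus_fixed[OF B_null A_stoch])
  then show ?thesis using xs_fixed_comm by simp
qed

lemma prox_arg_diff:
  "prox_arg x u - prox_arg xs us = ((x - alpha *\<^sub>R gradF g x) - ws) - kron S (u - us)"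
  unfolding prox_arg_def fix_w kron_diff by (simp add: algebra_simps)

lemma comm_step_primal:
  "norm (fst (comm_step s) - xs) \<le> norm (kron A (prox_arg (fst s) (snd s) - prox_arg xs us))"
  using proxR_nonexpansive[of "kron A (prox_arg (fst s) (snd s))" "kron A (prox_arg xs us)"]
  unfolding comm_step_def xs_fixed_comm kron_diff by simp

lemma local_step_primal:
  "norm (fst (local_step s) - xs) \<le> norm (prox_arg (fst s) (snd s) - prox_arg xs us)"
  using proxR_nonexpansive[of "prox_arg (fst s) (snd s)" "prox_arg xs us"]
  unfolding local_step_def xs_fixed_local by simp

lemma comm_step_dual:
  "snd (comm_step s) - us = (snd s - us) + p *\<^sub>R kron S (prox_arg (fst s) (snd s) - prox_arg xs us)"
  unfolding comm_step_def kron_diff kron_S_prox_arg_fixed by simp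

lemma lyapunov_comm_step:
  fixes s :: "('v^'n) \<times> ('v^'n)"
  defines "e \<equiv> prox_arg (fst s) (snd s) - prox_arg xs us"
  shows "lyapunov (comm_step s) \<le> e \<bullet> kron (A ** A) e
           + (1 / p^2) * (norm (snd s - us)^2 + 2 * p * (kron S (snd s - us) \<bullet> e) + p^2 * (e \<bullet> kron B e))"
proof -
  have "norm (fst (comm_step s) - xs)^2 \<le> e \<bullet> kron (A ** A) e"
    unfolding norm_kron_power2[OF A_sym, symmetric] e_def
    using comm_step_primal[of s] by (intro power_mono) auto
  moreover have "norm (snd (comm_step s) - us)^2
      = norm (snd s - us)^2 + 2 * p * ((snd s - us) \<bullet> kron S e) + p^2 * norm (kron S e)^2"
    unfolding comm_step_dual e_def[symmetric] power2_norm_eq_inner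
    by (simp add: inner_add_left inner_add_right inner_commute power2_eq_square algebra_simps)
  moreover have "norm (kron S e)^2 = e \<bullet> kron B e"
    unfolding norm_kron_power2[OF S_sym] S_square ..
  moreover have "(snd s - us) \<bullet> kron S e = kron S (snd s - us) \<bullet> e"
    by (rule kron_inner_symmetric[OF S_sym, symmetric])
  ultimately show ?thesis unfolding lyapunov_def by simp
qed

lemma lyapunov_local_step:
  "lyapunov (local_step s) \<le> norm (prox_arg (fst s) (snd s) - prox_arg xs us)^2 + (1 / p^2) * norm (snd s - us)^2"
  using local_step_primal[of s] unfolding lyapunov_def local_step_def by (simp add: power_mono)

lemma lyapunov_decrease:
  "p * lyapunov (comm_step s) + (1 - p) * lyapunov (local_step s) \<le> lyapunov s - decrease s"
proof -
  obtain x u where s: "s = (x, u)" by force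
  define wt ut where "wt = (x - alpha *\<^sub>R gradF g x) - ws" and "ut = u - us"
  define e where "e = prox_arg x u - prox_arg xs us"
  have e: "e = wt - kron S ut" unfolding e_def wt_def ut_def prox_arg_diff ..
  define a b q where "a = e \<bullet> kron (A ** A) e" and "b = e \<bullet> kron B e" and "q = kron S ut \<bullet> e"
  define P where "P = 1 / p^2"
  have p0: "0 < p" "p \<le> 1" using p by auto
  have psd: "a + b \<le> norm e^2"
    using psd_kron_nonneg[OF IAB_psd, of e]
    unfolding a_def b_def kron_diff_left kron_mat_1 inner_diff_right power2_norm_eq_inner by simp
  have "p * lyapunov (comm_step s) + (1 - p) * lyapunov (local_step s)
      \<le> p * (a + P * (norm ut^2 + 2 * p * q + p^2 * b)) + (1 - p) * (norm e^2 + P * norm ut^2)"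
    using lyapunov_comm_step[of s] lyapunov_local_step[of s] p0
    unfolding s a_def b_def q_def P_def e_def ut_def by (intro add_mono mult_left_mono) auto
  also have "\<dots> = p * (a + b) + (1 - p) * norm e^2 + P * norm ut^2 + 2 * q"
  proof -
    have "P * p^2 = 1" unfolding P_def using p0 by simp
    moreover have "p * (a + P * (norm ut^2 + 2 * p * q + p^2 * b))
        = p * a + p * P * norm ut^2 + 2 * q * (P * p^2) + p * b * (P * p^2)"
      by (simp add: algebra_simps power2_eq_square)
    ultimately show ?thesis by (simp add: algebra_simps)
  qed
  also have "\<dots> \<le> norm e^2 + P * norm ut^2 + 2 * q"
    using mult_left_mono[OF psd, of p] p0 by (simp add: algebra_simps)
  also have "\<dots> = norm wt^2 - norm (kron S ut)^2 + P * norm ut^2"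
    unfolding e q_def power2_norm_eq_inner by (simp add: inner_diff_left inner_diff_right inner_commute)
  also have "\<dots> \<le> lyapunov s - decrease s"
    using gradient_step_bound[of x] unfolding lyapunov_def decrease_def s P_def ut_def wt_def by simp
  finally show ?thesis .
qed

end

section \<open>Independent coins\<close>

text \<open>The first \<open>k\<close> coin outcomes, padded with \<open>False\<close>: the iterates up to step \<open>k\<close> depend on
  \<open>\<omega>\<close> only through this finitely-valued random variable.\<close>
definition coin_prefix :: "(nat \<Rightarrow> 'w \<Rightarrow> bool) \<Rightarrow> nat \<Rightarrow> 'w \<Rightarrow> nat \<Rightarrow> bool" where
  "coin_prefix theta k \<omega> = (\<lambda>j. j < k \<and> theta j \<omega>)"

lemma coin_prefix_Suc: "coin_prefix theta (Suc k) \<omega> = (coin_prefix theta k \<omega>)(k := theta k \<omega>)"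
  by (auto simp: coin_prefix_def fun_eq_iff less_Suc_eq)

lemma coin_prefix_upd_self: "(coin_prefix theta k \<omega>)(k := False) = coin_prefix theta k \<omega>"
  by (auto simp: coin_prefix_def fun_eq_iff)

definition prefixes :: "nat \<Rightarrow> (nat \<Rightarrow> bool) set" where
  "prefixes k = {c. \<forall>j. k \<le> j \<longrightarrow> \<not> c j}"

lemma finite_prefixes: "finite (prefixes k)"
proof (rule finite_subset)
  show "prefixes k \<subseteq> (\<lambda>J j. j \<in> J) ` Pow {..<k}"
  proof
    fix c assume "c \<in> prefixes k"
    then have "{j. c j} \<in> Pow {..<k}" unfolding prefixes_def by (auto simp: not_le[symmetric])
    then show "c \<in> (\<lambda>J j. j \<in> J) ` Pow {..<k}" by (auto intro: image_eqI[where x = "{j. c j}"])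
  qed
qed simp

lemma coin_prefix_in_prefixes: "coin_prefix theta k \<omega> \<in> prefixes k"
  unfolding coin_prefix_def prefixes_def by auto

lemma borel_measurable_PiM_bool_finite:
  assumes "finite I"
  shows "(h :: (nat \<Rightarrow> bool) \<Rightarrow> real) \<in> borel_measurable (PiM I (\<lambda>_. count_space UNIV))"
proof -
  have "PiM I (\<lambda>_. count_space (UNIV :: bool set)) = count_space (PiE I (\<lambda>_. UNIV))"
    by (rule count_space_PiM_finite[OF assms]) simp
  then show ?thesis by simp
qed

locale bernoulli_coins = prob_space M for M :: "'w measure" +
  fixes theta :: "nat \<Rightarrow> 'w \<Rightarrow> bool" and p :: real
  assumes indep: "indep_vars (\<lambda>_. count_space UNIV) theta UNIV"
    and distr: "\<forall>k. distr M (count_space UNIV) (theta k) = measure_pmf (bernoulli_pmf p)"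
    and p01: "0 \<le> p" "p \<le> 1"
begin

lemma measurable_coin: "theta k \<in> measurable M (count_space UNIV)"
  using indep unfolding indep_vars_def2 by auto

lemma borel_measurable_coin_prefix: "(\<lambda>\<omega>. (h :: (nat \<Rightarrow> bool) \<Rightarrow> real) (coin_prefix theta k \<omega>)) \<in> borel_measurable M"
proof (induction k arbitrary: h)
  case 0
  then show ?case by (simp add: coin_prefix_def)
next
  case (Suc k)
  have "{\<omega> \<in> space M. theta k \<omega>} \<in> sets M"
    using measurable_sets[OF measurable_coin, of "{True}"] by (simp add: vimage_def Int_def conj_commute)
  then have "(\<lambda>\<omega>. if theta k \<omega> then h ((coin_prefix theta k \<omega>)(k := True))
                 else h ((coin_prefix theta k \<omega>)(k := False))) \<in> borel_measurable M"
    by (rule measurable_If[OF Suc.IH Suc.IH])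
  also have "(\<lambda>\<omega>. if theta k \<omega> then h ((coin_prefix theta k \<omega>)(k := True))
                 else h ((coin_prefix theta k \<omega>)(k := False))) = (\<lambda>\<omega>. h (coin_prefix theta (Suc k) \<omega>))"
    by (auto simp: coin_prefix_Suc fun_eq_iff)
  finally show ?case .
qed

lemma integrable_coin_prefix: "integrable M (\<lambda>\<omega>. (h :: (nat \<Rightarrow> bool) \<Rightarrow> real) (coin_prefix theta k \<omega>))"
proof (rule integrable_const_bound)
  show "AE \<omega> in M. norm (h (coin_prefix theta k \<omega>)) \<le> (\<Sum>c\<in>prefixes k. \<bar>h c\<bar>)"
  proof (intro AE_I2)
    fix \<omega>
    have "\<bar>h (coin_prefix theta k \<omega>)\<bar> \<le> (\<Sum>c\<in>prefixes k. \<bar>h c\<bar>)"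
      by (rule member_le_sum[OF coin_prefix_in_prefixes]) (auto simp: finite_prefixes)
    then show "norm (h (coin_prefix theta k \<omega>)) \<le> (\<Sum>c\<in>prefixes k. \<bar>h c\<bar>)" by simp
  qed
qed (rule borel_measurable_coin_prefix)

lemma expectation_coin: "(\<integral>\<omega>. (if theta k \<omega> then 1 else 0 :: real) \<partial>M) = p"
proof -
  have "(\<integral>\<omega>. (if theta k \<omega> then 1 else 0 :: real) \<partial>M)
      = (\<integral>\<omega>. indicator (theta k -` {True} \<inter> space M) \<omega> \<partial>M)"
    by (intro Bochner_Integration.integral_cong) (auto simp: indicator_def)
  also have "\<dots> = measure M (theta k -` {True} \<inter> space M)" by simp
  also have "\<dots> = measure (distr M (count_space UNIV) (theta k)) {True}"
    by (rule measure_distr[OF measurable_coin, symmetric]) auto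
  also have "\<dots> = p" using distr p01 by (simp add: measure_pmf_single)
  finally show ?thesis .
qed

lemma integral_coin_times_prefix:
  "(\<integral>\<omega>. (if theta k \<omega> then 1 else 0) * (G :: (nat \<Rightarrow> bool) \<Rightarrow> real) (coin_prefix theta k \<omega>) \<partial>M)
     = p * (\<integral>\<omega>. G (coin_prefix theta k \<omega>) \<partial>M)"
proof -
  define Y1 where "Y1 c = (if c k then 1 else 0 :: real)" for c :: "nat \<Rightarrow> bool"
  define Y2 where "Y2 c = G (\<lambda>j. j < k \<and> c j)" for c :: "nat \<Rightarrow> bool"
  have "indep_var (PiM {k} (\<lambda>_. count_space UNIV)) (\<lambda>\<omega>. restrict (\<lambda>i. theta i \<omega>) {k})
                  (PiM {..<k} (\<lambda>_. count_space UNIV)) (\<lambda>\<omega>. restrict (\<lambda>i. theta i \<omega>) {..<k})"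
    by (rule indep_var_restrict[OF indep]) auto
  then have "indep_var borel (Y1 \<circ> (\<lambda>\<omega>. restrict (\<lambda>i. theta i \<omega>) {k}))
                  borel (Y2 \<circ> (\<lambda>\<omega>. restrict (\<lambda>i. theta i \<omega>) {..<k}))"
    by (rule indep_var_compose[OF _ borel_measurable_PiM_bool_finite borel_measurable_PiM_bool_finite]) auto
  moreover have "Y1 \<circ> (\<lambda>\<omega>. restrict (\<lambda>i. theta i \<omega>) {k}) = (\<lambda>\<omega>. if theta k \<omega> then 1 else 0)"
    by (auto simp: Y1_def fun_eq_iff)
  moreover have "Y2 \<circ> (\<lambda>\<omega>. restrict (\<lambda>i. theta i \<omega>) {..<k}) = (\<lambda>\<omega>. G (coin_prefix theta k \<omega>))"
    by (auto simp: Y2_def fun_eq_iff coin_prefix_def cong: conj_cong)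
  ultimately have indep: "indep_var borel (\<lambda>\<omega>. if theta k \<omega> then 1 else 0 :: real)
                             borel (\<lambda>\<omega>. G (coin_prefix theta k \<omega>))"
    by simp
  have "integrable M (\<lambda>\<omega>. if theta k \<omega> then 1 else 0 :: real)"
    using integrable_coin_prefix[of "\<lambda>c. if c k then 1 else 0" "Suc k"] by (simp add: coin_prefix_def)
  then show ?thesis
    using indep_var_lebesgue_integral[OF indep _ integrable_coin_prefix] expectation_coin by simp
qed

text \<open>Conditioning on the first \<open>k\<close> coins: the \<open>k\<close>-th coin is independent of them.\<close>
lemma integral_coin_prefix_Suc:
  "(\<integral>\<omega>. (h :: (nat \<Rightarrow> bool) \<Rightarrow> real) (coin_prefix theta (Suc k) \<omega>) \<partial>M)
    = (\<integral>\<omega>. p * h ((coin_prefix theta k \<omega>)(k := True))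
            + (1 - p) * h ((coin_prefix theta k \<omega>)(k := False)) \<partial>M)"
proof -
  define I where "I \<omega> = (if theta k \<omega> then 1 else 0 :: real)" for \<omega>
  define G1 G0 where "G1 c = h (c(k := True))" and "G0 c = h (c(k := False))" for c
  have split: "h (coin_prefix theta (Suc k) \<omega>)
      = I \<omega> * G1 (coin_prefix theta k \<omega>) + (G0 (coin_prefix theta k \<omega>) - I \<omega> * G0 (coin_prefix theta k \<omega>))"
    for \<omega> by (simp add: I_def G1_def G0_def coin_prefix_Suc)
  have int: "integrable M (\<lambda>\<omega>. I \<omega> * G (coin_prefix theta k \<omega>))" for G
    using integrable_coin_prefix[of "\<lambda>c. (if c k then 1 else 0) * G (c(k := False))" "Suc k"]
    by (simp add: I_def coin_prefix_Suc coin_prefix_upd_self)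
  have "(\<integral>\<omega>. h (coin_prefix theta (Suc k) \<omega>) \<partial>M)
     = (\<integral>\<omega>. I \<omega> * G1 (coin_prefix theta k \<omega>) \<partial>M)
       + ((\<integral>\<omega>. G0 (coin_prefix theta k \<omega>) \<partial>M) - (\<integral>\<omega>. I \<omega> * G0 (coin_prefix theta k \<omega>) \<partial>M))"
    unfolding split by (simp add: int integrable_coin_prefix)
  also have "\<dots> = p * (\<integral>\<omega>. G1 (coin_prefix theta k \<omega>) \<partial>M)
       + ((\<integral>\<omega>. G0 (coin_prefix theta k \<omega>) \<partial>M) - p * (\<integral>\<omega>. G0 (coin_prefix theta k \<omega>) \<partial>M))"
    unfolding I_def integral_coin_times_prefix ..
  also have "\<dots> = (\<integral>\<omega>. p * G1 (coin_prefix theta k \<omega>) + (1 - p) * G0 (coin_prefix theta k \<omega>) \<partial>M)"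
    by (simp add: integrable_coin_prefix algebra_simps)
  finally show ?thesis unfolding G1_def G0_def .
qed

end

section \<open>Convergence from summable expectations\<close>

context prob_space
begin

lemma AE_tendsto_zero_if_summable_integrals:
  fixes b :: "nat \<Rightarrow> 'a \<Rightarrow> real"
  assumes int: "\<And>k. integrable M (b k)" and nonneg: "\<And>k \<omega>. 0 \<le> b k \<omega>"
    and summable: "summable (\<lambda>k. \<integral>\<omega>. b k \<omega> \<partial>M)"
  shows "AE \<omega> in M. (\<lambda>k. b k \<omega>) \<longlonglongrightarrow> 0"
proof -
  have meas: "(\<lambda>\<omega>. ennreal (b k \<omega>)) \<in> borel_measurable M" for k
    using borel_measurable_integrable[OF int] by measurable
  have "(\<integral>\<^sup>+\<omega>. (\<Sum>k. ennreal (b k \<omega>)) \<partial>M) = (\<Sum>k. \<integral>\<^sup>+\<omega>. ennreal (b k \<omega>) \<partial>M)"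
    by (rule nn_integral_suminf[OF meas])
  also have "\<dots> = (\<Sum>k. ennreal (\<integral>\<omega>. b k \<omega> \<partial>M))"
    by (intro arg_cong[where f = suminf] ext nn_integral_eq_integral int AE_I2 nonneg)
  also have "\<dots> = ennreal (\<Sum>k. \<integral>\<omega>. b k \<omega> \<partial>M)"
    by (intro suminf_ennreal2 summable integral_nonneg_AE AE_I2 nonneg)
  finally have "(\<integral>\<^sup>+\<omega>. (\<Sum>k. ennreal (b k \<omega>)) \<partial>M) \<noteq> \<infinity>" by simp
  then have "AE \<omega> in M. (\<Sum>k. ennreal (b k \<omega>)) \<noteq> \<infinity>"
    by (intro nn_integral_PInf_AE) (use meas in measurable)
  then show ?thesis
  proof (rule AE_mp, intro AE_I2 impI)
    fix \<omega> assume "(\<Sum>k. ennreal (b k \<omega>)) \<noteq> \<infinity>"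
    then have "summable (\<lambda>k. b k \<omega>)"
      by (intro summable_suminf_not_top) (auto simp: nonneg)
    then show "(\<lambda>k. b k \<omega>) \<longlonglongrightarrow> 0" by (rule summable_LIMSEQ_zero)
  qed
qed

lemma AE_tendsto_zero_dominated:
  assumes lim: "AE \<omega> in M. (\<lambda>k. b k \<omega>) \<longlonglongrightarrow> 0"
    and nonneg: "\<And>k \<omega>. 0 \<le> (a k \<omega> :: real)" and le: "\<And>k \<omega>. a k \<omega> \<le> C * b k \<omega>"
  shows "AE \<omega> in M. (\<lambda>k. a k \<omega>) \<longlonglongrightarrow> 0"
  using lim
proof (rule AE_mp, intro AE_I2 impI)
  fix \<omega> assume "(\<lambda>k. b k \<omega>) \<longlonglongrightarrow> 0"
  then have Cb: "(\<lambda>k. C * b k \<omega>) \<longlonglongrightarrow> 0" by (rule tendsto_mult_right_zero)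
  show "(\<lambda>k. a k \<omega>) \<longlonglongrightarrow> 0"
    by (rule tendsto_sandwich[OF _ _ tendsto_const Cb]) (simp_all add: nonneg le)
qed

lemma integral_tendsto_zero_dominated:
  assumes lim: "(\<lambda>k. \<integral>\<omega>. b k \<omega> \<partial>M) \<longlonglongrightarrow> 0"
    and int_a: "\<And>k. integrable M (a k)" and int_b: "\<And>k. integrable M (b k)"
    and nonneg: "\<And>k \<omega>. 0 \<le> (a k \<omega> :: real)" and le: "\<And>k \<omega>. a k \<omega> \<le> C * b k \<omega>"
  shows "(\<lambda>k. \<integral>\<omega>. a k \<omega> \<partial>M) \<longlonglongrightarrow> 0"
proof (rule tendsto_sandwich[OF always_eventually always_eventually tendsto_const])
  show "(\<lambda>k. C * (\<integral>\<omega>. b k \<omega> \<partial>M)) \<longlonglongrightarrow> 0" using lim by (rule tendsto_mult_right_zero)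
  show "\<forall>k. 0 \<le> (\<integral>\<omega>. a k \<omega> \<partial>M)" by (intro allI integral_nonneg_AE AE_I2 nonneg)
  show "\<forall>k. (\<integral>\<omega>. a k \<omega> \<partial>M) \<le> C * (\<integral>\<omega>. b k \<omega> \<partial>M)"
  proof
    fix k
    have "(\<integral>\<omega>. a k \<omega> \<partial>M) \<le> (\<integral>\<omega>. C * b k \<omega> \<partial>M)"
      using int_a int_b le by (intro integral_mono) auto
    then show "(\<integral>\<omega>. a k \<omega> \<partial>M) \<le> C * (\<integral>\<omega>. b k \<omega> \<partial>M)" by simp
  qed
qed

end

section \<open>The random iteration\<close>

locale flexatc_random =
  flexatc_fixed_point f g r mu L alpha p A B S xs ws us + bernoulli_coins M theta p
  for f :: "'n::finite \<Rightarrow> 'v::euclidean_space \<Rightarrow> real" and g r mu L alpha p A B S xs ws us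
    and M :: "'w measure" and theta +
  fixes x0 :: "'v^'n"
begin

abbreviation run :: "(nat \<Rightarrow> bool) \<Rightarrow> nat \<Rightarrow> ('v^'n) \<times> ('v^'n)" where
  "run c k \<equiv> flexatc A S alpha p g r x0 c k"

abbreviation iter :: "nat \<Rightarrow> 'w \<Rightarrow> ('v^'n) \<times> ('v^'n)" where
  "iter k \<omega> \<equiv> run (\<lambda>j. theta j \<omega>) k"

lemma iter_eq_run_coin_prefix: "k \<le> K \<Longrightarrow> iter k \<omega> = run (coin_prefix theta K \<omega>) k"
  by (rule flexatc_cong) (auto simp: coin_prefix_def)

lemma run_fun_upd_Suc: "run (c(k := b)) (Suc k) = (if b then comm_step else local_step) (run c k)"
proof -
  have "run c k = run (c(k := b)) k" by (rule flexatc_cong) auto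
  then show ?thesis unfolding flexatc_Suc_step fun_upd_same by simp
qed

lemma sum_iter_eq_run_coin_prefix:
  "(\<Sum>k<K. F (iter k \<omega>)) = (\<Sum>k<K. F (run (coin_prefix theta K \<omega>) k))"
  by (rule sum.cong[OF refl]) (simp add: iter_eq_run_coin_prefix[of _ K])

lemma integrable_iter: "integrable M (\<lambda>\<omega>. (h :: _ \<Rightarrow> real) (iter k \<omega>))"
  using integrable_coin_prefix[of "\<lambda>c. h (run c k)" k] iter_eq_run_coin_prefix[of k k] by simp

lemma mean_lyapunov_step:
  "(\<integral>\<omega>. lyapunov (iter (Suc k) \<omega>) \<partial>M)
     \<le> (\<integral>\<omega>. lyapunov (iter k \<omega>) \<partial>M) - (\<integral>\<omega>. decrease (iter k \<omega>) \<partial>M)"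
proof -
  have "(\<integral>\<omega>. lyapunov (iter (Suc k) \<omega>) \<partial>M)
      = (\<integral>\<omega>. p * lyapunov (comm_step (iter k \<omega>)) + (1 - p) * lyapunov (local_step (iter k \<omega>)) \<partial>M)"
    using integral_coin_prefix_Suc[of "\<lambda>c. lyapunov (run c (Suc k))" k]
      iter_eq_run_coin_prefix[of "Suc k" "Suc k"] iter_eq_run_coin_prefix[of k k]
    by (simp del: flexatc.simps add: run_fun_upd_Suc)
  also have "\<dots> \<le> (\<integral>\<omega>. lyapunov (iter k \<omega>) - decrease (iter k \<omega>) \<partial>M)"
    by (intro integral_mono integrable_iter lyapunov_decrease)
  also have "\<dots> = (\<integral>\<omega>. lyapunov (iter k \<omega>) \<partial>M) - (\<integral>\<omega>. decrease (iter k \<omega>) \<partial>M)"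
    by (simp add: integrable_iter)
  finally show ?thesis .
qed

lemma sum_mean_decrease_le: "(\<Sum>k<K. \<integral>\<omega>. decrease (iter k \<omega>) \<partial>M) \<le> lyapunov (x0, 0)"
proof -
  define EV where "EV k = (\<integral>\<omega>. lyapunov (iter k \<omega>) \<partial>M)" for k
  have "(\<Sum>k<K. \<integral>\<omega>. decrease (iter k \<omega>) \<partial>M) \<le> EV 0 - EV K"
  proof (induction K)
    case (Suc K)
    then show ?case using mean_lyapunov_step[of K] unfolding EV_def by (simp del: flexatc.simps)
  qed simp
  moreover have "EV 0 = lyapunov (x0, 0)" unfolding EV_def by (simp add: prob_space)
  moreover have "0 \<le> EV K"
    unfolding EV_def using p by (intro integral_nonneg_AE) (auto simp: lyapunov_def)
  ultimately show ?thesis by simp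
qed

lemma summable_mean_decrease: "summable (\<lambda>k. \<integral>\<omega>. decrease (iter k \<omega>) \<partial>M)"
  using sum_mean_decrease_le decrease_nonneg
  by (intro summableI_nonneg_bounded integral_nonneg_AE) auto

lemma decrease_AE_tendsto: "AE \<omega> in M. (\<lambda>k. decrease (iter k \<omega>)) \<longlonglongrightarrow> 0"
  by (rule AE_tendsto_zero_if_summable_integrals[OF integrable_iter decrease_nonneg summable_mean_decrease])

lemma mean_decrease_tendsto: "(\<lambda>k. \<integral>\<omega>. decrease (iter k \<omega>) \<partial>M) \<longlonglongrightarrow> 0"
  by (rule summable_LIMSEQ_zero[OF summable_mean_decrease])

lemma run_dual_in_range: "snd (run c k) \<in> range (kron S)"
proof (induction k)
  case 0
  show ?case using kron_zero[of S, symmetric] by auto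
next
  case (Suc k)
  have "subspace (range (kron S :: 'v^'n \<Rightarrow> 'v^'n))"
    using linear_subspace_image[OF linear_kron subspace_UNIV] by simp
  then show ?case
    using Suc unfolding flexatc_Suc_step comm_step_def local_step_def
    by (auto intro!: subspace_add subspace_scale)
qed

text \<open>\<open>u\<^sub>k - u\<^sup>*\<close> lies in the range of \<open>\<surd>B\<close>, on which \<open>\<surd>B\<close> is bounded below.\<close>
lemma dual_error_le_decrease:
  obtains \<kappa> where "\<kappa> > 0" "\<And>c k. norm (snd (run c k) - us)^2 \<le> \<kappa> * decrease (run c k)"
proof -
  obtain e where e: "e > 0" "\<And>y :: 'v^'n. y \<in> range (kron S) \<Longrightarrow> e * norm y \<le> norm (kron S y)"
    using self_adjoint_bounded_below_on_range[OF linear_kron kron_inner_symmetric[OF S_sym]] by blast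
  have "norm (snd (run c k) - us)^2 \<le> (1 / e)^2 * decrease (run c k)" for c k
  proof -
    have "subspace (range (kron S :: 'v^'n \<Rightarrow> 'v^'n))"
      using linear_subspace_image[OF linear_kron subspace_UNIV] by simp
    then have "snd (run c k) - us \<in> range (kron S)"
      using run_dual_in_range us_range by (intro subspace_diff)
    then have "norm (snd (run c k) - us) \<le> (1 / e) * norm (kron S (snd (run c k) - us))"
      using e by (simp add: field_simps mult.commute)
    then have "norm (snd (run c k) - us)^2 \<le> (1 / e)^2 * norm (kron S (snd (run c k) - us))^2"
      by (metis norm_ge_zero power_mono power_mult_distrib)
    also have "\<dots> \<le> (1 / e)^2 * decrease (run c k)"
      using decrease_bounds(1) by (intro mult_left_mono) auto
    finally show ?thesis .
  qed
  then show ?thesis using that[of "(1 / e)^2"] e by simp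
qed

text \<open>Jensen's inequality for the convex functions \<open>bregman\<close> and \<open>norm\<^sup>2\<close>.\<close>
lemma ergodic_bound_run:
  assumes K: "K \<ge> 1" and \<kappa>: "\<And>c k. norm (snd (run c k) - us)^2 \<le> \<kappa> * decrease (run c k)"
  shows "norm (gradF g ((1 / real K) *\<^sub>R (\<Sum>k<K. fst (run c k))) - gradF g xs)^2
         + norm ((1 / real K) *\<^sub>R (\<Sum>k<K. snd (run c k)) - us)^2
       \<le> (2 * L / c1 + \<kappa>) / real K * (\<Sum>k<K. decrease (run c k))"
proof -
  define a where "a = 1 / real K"
  have a0: "0 \<le> a" unfolding a_def by simp
  have asum: "(\<Sum>k<K. a) = 1" unfolding a_def using K by simp
  have ne: "{..<K} \<noteq> {}" using K by (metis One_nat_def Suc_le_eq empty_iff lessThan_iff)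
  define xb where "xb = a *\<^sub>R (\<Sum>k<K. fst (run c k))"
  have "norm (gradF g xb - gradF g xs)^2 \<le> 2 * L * bregman xb"
    using bregman_lower_bound[of xb] L by (simp add: field_simps)
  also have "\<dots> \<le> 2 * L * (\<Sum>k<K. a * bregman (fst (run c k)))"
    unfolding xb_def scaleR_sum_right using L a0
    by (intro mult_left_mono convex_on_sum[OF _ ne convex_on_bregman asum]) auto
  also have "\<dots> \<le> 2 * L * (\<Sum>k<K. a * (decrease (run c k) / c1))"
    using a0 L decrease_bounds(3) by (intro mult_left_mono sum_mono) auto
  finally have grad: "norm (gradF g xb - gradF g xs)^2 \<le> 2 * L * (\<Sum>k<K. a * (decrease (run c k) / c1))" .
  have "a *\<^sub>R (\<Sum>k<K. snd (run c k)) - us = (\<Sum>k<K. a *\<^sub>R (snd (run c k) - us))"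
    using asum by (simp add: scaleR_sum_right scaleR_diff_right sum_subtractf scaleR_sum_left[symmetric])
  then have "norm (a *\<^sub>R (\<Sum>k<K. snd (run c k)) - us)^2 \<le> (\<Sum>k<K. a * norm (snd (run c k) - us)^2)"
    using convex_on_sum[OF _ ne convex_on_norm_power2 asum, of "\<lambda>k. snd (run c k) - us"] a0 by simp
  also have "\<dots> \<le> (\<Sum>k<K. a * (\<kappa> * decrease (run c k)))"
    using a0 \<kappa> by (intro sum_mono mult_left_mono) auto
  finally have dual: "norm (a *\<^sub>R (\<Sum>k<K. snd (run c k)) - us)^2 \<le> (\<Sum>k<K. a * (\<kappa> * decrease (run c k)))" .
  have "2 * L * (\<Sum>k<K. a * (decrease (run c k) / c1)) + (\<Sum>k<K. a * (\<kappa> * decrease (run c k)))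
      = (2 * L / c1 + \<kappa>) * a * (\<Sum>k<K. decrease (run c k))"
    by (simp add: sum_distrib_left algebra_simps sum.distrib)
  with grad dual show ?thesis unfolding xb_def a_def by simp
qed

definition ergodic_error :: "nat \<Rightarrow> 'w \<Rightarrow> real" where
  "ergodic_error K \<omega> = norm (gradF g ((1 / real K) *\<^sub>R (\<Sum>k<K. fst (iter k \<omega>))) - gradF g xs)^2
                      + norm ((1 / real K) *\<^sub>R (\<Sum>k<K. snd (iter k \<omega>)) - us)^2"

lemma ergodic_rate:
  "\<exists>C. \<forall>K \<ge> 1. integrable M (ergodic_error K) \<and> (\<integral>\<omega>. ergodic_error K \<omega> \<partial>M) \<le> C / real K"
proof -
  obtain \<kappa> where \<kappa>: "\<kappa> > 0" "\<And>c k. norm (snd (run c k) - us)^2 \<le> \<kappa> * decrease (run c k)"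
    using dual_error_le_decrease by blast
  define C where "C = (2 * L / c1 + \<kappa>) * lyapunov (x0, 0)"
  have "integrable M (ergodic_error K) \<and> (\<integral>\<omega>. ergodic_error K \<omega> \<partial>M) \<le> C / real K"
    if K: "K \<ge> 1" for K
  proof
    define H where "H c = norm (gradF g ((1 / real K) *\<^sub>R (\<Sum>k<K. fst (run c k))) - gradF g xs)^2
         + norm ((1 / real K) *\<^sub>R (\<Sum>k<K. snd (run c k)) - us)^2" for c
    have EH: "ergodic_error K \<omega> = H (coin_prefix theta K \<omega>)" for \<omega>
      unfolding ergodic_error_def H_def
        sum_iter_eq_run_coin_prefix[where F = fst and K = K] sum_iter_eq_run_coin_prefix[where F = snd and K = K] ..
    show "integrable M (ergodic_error K)" unfolding EH[abs_def] by (rule integrable_coin_prefix)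
    have "(\<integral>\<omega>. ergodic_error K \<omega> \<partial>M)
        \<le> (\<integral>\<omega>. (2 * L / c1 + \<kappa>) / real K * (\<Sum>k<K. decrease (iter k \<omega>)) \<partial>M)"
      unfolding EH H_def sum_iter_eq_run_coin_prefix[where F = decrease and K = K]
      by (intro integral_mono integrable_coin_prefix ergodic_bound_run[OF K \<kappa>(2)])
    also have "\<dots> = (2 * L / c1 + \<kappa>) / real K * (\<Sum>k<K. \<integral>\<omega>. decrease (iter k \<omega>) \<partial>M)"
      by (simp add: integrable_iter)
    also have "\<dots> \<le> (2 * L / c1 + \<kappa>) / real K * lyapunov (x0, 0)"
      using sum_mean_decrease_le c1_pos \<kappa> L by (intro mult_left_mono) auto
    finally show "(\<integral>\<omega>. ergodic_error K \<omega> \<partial>M) \<le> C / real K" unfolding C_def by simp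
  qed
  then show ?thesis by blast
qed

end

theorem theorem1:
  fixes f :: "'n::finite \<Rightarrow> 'v::euclidean_space \<Rightarrow> real"
    and g :: "'n \<Rightarrow> 'v \<Rightarrow> 'v"
    and r :: "'v \<Rightarrow> ereal"
    and mu L alpha p :: real
    and W A B S :: "real^'n^'n"
    and E :: "'n \<Rightarrow> 'n \<Rightarrow> bool"
    and x0 xs ws us :: "'v^'n"
    and M :: "'w measure"
    and theta :: "nat \<Rightarrow> 'w \<Rightarrow> bool"
  defines "xk \<equiv> (\<lambda>k \<omega>. fst (flexatc A S alpha p g r x0 (\<lambda>j. theta j \<omega>) k))"
    and "uk \<equiv> (\<lambda>k \<omega>. snd (flexatc A S alpha p g r x0 (\<lambda>j. theta j \<omega>) k))"
  assumes mu: "0 \<le> mu" and L: "0 < L"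
    and f_cvx: "\<forall>i. strongly_convex mu (f i)"
    and f_smooth: "\<forall>i. smooth L (f i) (g i)"
    and r_proper: "ext_proper r" and r_closed: "ext_closed r" and r_convex: "ext_convex r"
    and W_sym: "transpose W = W"
    and W_stoch: "W *v vec 1 = vec 1"
    and E_sym: "\<forall>i j. E i j \<longrightarrow> E j i"
    and E_irrefl: "\<forall>i. \<not> E i i"
    and E_conn: "\<forall>i j. E\<^sup>*\<^sup>* i j"
    and W_edge: "\<forall>i j. E i j \<longrightarrow> W $ i $ j > 0"
    and W_nonedge: "\<forall>i j. i \<noteq> j \<and> \<not> E i j \<longrightarrow> W $ i $ j = 0"
    and A_poly: "is_poly_in A W" and B_poly: "is_poly_in B W"
    and A_sym: "transpose A = A"
    and A_stoch: "A *v vec 1 = vec 1"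
    and B_psd: "psd B"
    and B_null: "{v. B *v v = 0} = span {vec 1}"
    and IAB_psd: "psd (mat 1 - A ** A - B)"
    and S_sqrt: "transpose S = S \<and> psd S \<and> S ** S = B"
    and alpha: "0 < alpha \<and> alpha < 2 / L"
    and p: "0 < p \<and> p \<le> 1"
    and fix_w: "ws = xs - alpha *\<^sub>R gradF g xs"
    and fix_x: "xs = proxR alpha r (kron A (ws - kron S us))"
    and fix_u: "0 = kron S (ws - kron S us)"
    and us_range: "us \<in> range (kron S)"
    and M_prob: "prob_space M"
    and theta_indep: "prob_space.indep_vars M (\<lambda>_. count_space UNIV) theta UNIV"
    and theta_distr: "\<forall>k. distr M (count_space UNIV) (theta k) = measure_pmf (bernoulli_pmf p)"
  shows
    "(AE \<omega> in M. (\<lambda>k. norm (gradF g (xk k \<omega>) - gradF g xs)^2) \<longlonglongrightarrow> 0)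
     \<and> (AE \<omega> in M. (\<lambda>k. norm (uk k \<omega> - us)^2) \<longlonglongrightarrow> 0)
     \<and> (\<forall>k. integrable M (\<lambda>\<omega>. norm (gradF g (xk k \<omega>) - gradF g xs)^2))
     \<and> (\<forall>k. integrable M (\<lambda>\<omega>. norm (uk k \<omega> - us)^2))
     \<and> (\<lambda>k. LINT \<omega>|M. norm (gradF g (xk k \<omega>) - gradF g xs)^2) \<longlonglongrightarrow> 0
     \<and> (\<lambda>k. LINT \<omega>|M. norm (uk k \<omega> - us)^2) \<longlonglongrightarrow> 0
     \<and> (\<exists>C. \<forall>K::nat. K \<ge> 1 \<longrightarrow>
          integrable M (\<lambda>\<omega>. norm (gradF g ((1 / real K) *\<^sub>R (\<Sum>k<K. xk k \<omega>)) - gradF g xs)^2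
                              + norm ((1 / real K) *\<^sub>R (\<Sum>k<K. uk k \<omega>) - us)^2)
          \<and> (LINT \<omega>|M. norm (gradF g ((1 / real K) *\<^sub>R (\<Sum>k<K. xk k \<omega>)) - gradF g xs)^2
                        + norm ((1 / real K) *\<^sub>R (\<Sum>k<K. uk k \<omega>) - us)^2) \<le> C / real K)"
proof -
  interpret flexatc_random f g r mu L alpha p A B S xs ws us M theta x0
    using mu L f_cvx f_smooth r_proper r_closed r_convex A_sym A_stoch B_null IAB_psd S_sqrt alpha p
      fix_w fix_x fix_u us_range M_prob theta_indep theta_distr
    by (intro flexatc_random.intro flexatc_fixed_point.intro bernoulli_coins.intro
        bernoulli_coins_axioms.intro) auto
  have grad_le: "norm (gradF g (xk k \<omega>) - gradF g xs)^2 \<le> (1 / c0) * decrease (iter k \<omega>)" for k \<omega>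
    using decrease_bounds(2)[of "iter k \<omega>"] unfolding xk_def by simp
  obtain \<kappa> where dual_le: "\<And>k \<omega>. norm (uk k \<omega> - us)^2 \<le> \<kappa> * decrease (iter k \<omega>)"
    using dual_error_le_decrease unfolding uk_def by metis
  have int_grad: "integrable M (\<lambda>\<omega>. norm (gradF g (xk k \<omega>) - gradF g xs)^2)" for k
    unfolding xk_def by (rule integrable_iter)
  have int_dual: "integrable M (\<lambda>\<omega>. norm (uk k \<omega> - us)^2)" for k
    unfolding uk_def by (rule integrable_iter)
  show ?thesis
    using AE_tendsto_zero_dominated[OF decrease_AE_tendsto _ grad_le]
      AE_tendsto_zero_dominated[OF decrease_AE_tendsto _ dual_le]
      integral_tendsto_zero_dominated[OF mean_decrease_tendsto int_grad integrable_iter _ grad_le]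
      integral_tendsto_zero_dominated[OF mean_decrease_tendsto int_dual integrable_iter _ dual_le]
      int_grad int_dual ergodic_rate
    unfolding ergodic_error_def xk_def uk_def by simp
qed

end
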